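(* Let $A$ and $B$ be $\Bbbk$-algebras. Then there are isomorphisms of $\Bbbk$-vector spaces (1) $\mathcal{E}_{A\times B}\cong\mathcal{E}_A\times\mathcal{E}_B$; in particular $\operatorname{Frobdim}(A\times B)=\operatorname{Frobdim}(A)+\operatorname{Frobdim}(B)$; (2) $\mathcal{E}_{A\otimes B}\cong\mathcal{E}_A\otimes\mathcal{E}_B$; therefore $\operatorname{Frobdim}(A\otimes B)=\operatorname{Frobdim}(A)\cdot\operatorname{Frobdim}(B)$.
   Context: Algebras are associative and unital over a field $\Bbbk$; tensor products are over $\Bbbk$; $A\times B$ is the product algebra with componentwise operations and $A\otimes B$ the tensor product algebra. A nearly Frobenius coproduct on an algebra $A$ is a $\Bbbk$-linear map $\Delta:A\to A\otimes A$ that is an $A$-bimodule morphism, i.e. $\Delta(ab)=(a\otimes 1)\Delta(b)=\Delta(a)(1\otimes b)$ for all $a,b\in A$. The Frobenius space $\mathcal{E}_A$ is the vector space of all nearly Frobenius coproducts on $A$, and $\operatorname{Frobdim}A=\dim_\Bbbk\mathcal{E}_A$. *)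

theory Defs
  imports Main "HOL-Library.Function_Algebras" "HOL-Library.Product_Plus"
    "HOL-Library.Extended_Nat"
begin

text \<open>Vector spaces over a field 'k are abelian-group types 'v together with a scalar
  multiplication s :: 'k => 'v => 'v (HOL's vector_space locale).  Subspaces are sets.\<close>

definition lin_on ::
  "('k::field \<Rightarrow> 'v::ab_group_add \<Rightarrow> 'v) \<Rightarrow> 'v set \<Rightarrow> ('k \<Rightarrow> 'w::ab_group_add \<Rightarrow> 'w) \<Rightarrow> ('v \<Rightarrow> 'w) \<Rightarrow> bool"
  where "lin_on s1 S s2 f \<longleftrightarrow>
    (\<forall>x\<in>S. \<forall>y\<in>S. f (x + y) = f x + f y) \<and> (\<forall>c. \<forall>x\<in>S. f (s1 c x) = s2 c (f x))"

definition bilin_on ::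
  "('k::field \<Rightarrow> 'u::ab_group_add \<Rightarrow> 'u) \<Rightarrow> 'u set \<Rightarrow> ('k \<Rightarrow> 'v::ab_group_add \<Rightarrow> 'v) \<Rightarrow> 'v set
    \<Rightarrow> ('k \<Rightarrow> 'w::ab_group_add \<Rightarrow> 'w) \<Rightarrow> ('u \<Rightarrow> 'v \<Rightarrow> 'w) \<Rightarrow> bool"
  where "bilin_on s1 S1 s2 S2 s3 f \<longleftrightarrow>
    (\<forall>y\<in>S2. lin_on s1 S1 s3 (\<lambda>x. f x y)) \<and> (\<forall>x\<in>S1. lin_on s2 S2 s3 (f x))"

text \<open>Tensor product (of subspaces S1, S2) realized by the subspace S3 and the bilinear map
  tens: S3 is spanned by the pure tensors, and every bilinear map S1 x S2 -> k factors
  through a linear map S3 -> k.  (This is the universal property; testing it against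
  scalar-valued bilinear maps plus generation by pure tensors is equivalent to the full
  universal property, since linear functionals separate points.)\<close>

definition is_tensor_on ::
  "('k::field \<Rightarrow> 'u::ab_group_add \<Rightarrow> 'u) \<Rightarrow> 'u set \<Rightarrow> ('k \<Rightarrow> 'v::ab_group_add \<Rightarrow> 'v) \<Rightarrow> 'v set
    \<Rightarrow> ('k \<Rightarrow> 'w::ab_group_add \<Rightarrow> 'w) \<Rightarrow> 'w set \<Rightarrow> ('u \<Rightarrow> 'v \<Rightarrow> 'w) \<Rightarrow> bool"
  where "is_tensor_on s1 S1 s2 S2 s3 S3 tens \<longleftrightarrow>
    (\<forall>x\<in>S1. \<forall>y\<in>S2. tens x y \<in> S3) \<and>
    bilin_on s1 S1 s2 S2 s3 tens \<and>
    module.span s3 {tens x y | x y. x \<in> S1 \<and> y \<in> S2} = S3 \<and>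
    (\<forall>\<beta>. bilin_on s1 S1 s2 S2 (*) \<beta> \<longrightarrow>
       (\<exists>h. lin_on s3 S3 (*) h \<and> (\<forall>x\<in>S1. \<forall>y\<in>S2. h (tens x y) = \<beta> x y)))"

definition is_tensor ::
  "('k::field \<Rightarrow> 'u::ab_group_add \<Rightarrow> 'u) \<Rightarrow> ('k \<Rightarrow> 'v::ab_group_add \<Rightarrow> 'v)
    \<Rightarrow> ('k \<Rightarrow> 'w::ab_group_add \<Rightarrow> 'w) \<Rightarrow> ('u \<Rightarrow> 'v \<Rightarrow> 'w) \<Rightarrow> bool"
  where "is_tensor s1 s2 s3 tens \<longleftrightarrow> vector_space s1 \<and> vector_space s2 \<and> vector_space s3 \<and>
    is_tensor_on s1 UNIV s2 UNIV s3 UNIV tens"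

definition kalg :: "('k::field \<Rightarrow> 'a::ab_group_add \<Rightarrow> 'a) \<Rightarrow> ('a \<Rightarrow> 'a \<Rightarrow> 'a) \<Rightarrow> 'a \<Rightarrow> bool"
  where "kalg s m u \<longleftrightarrow> vector_space s \<and> bilin_on s UNIV s UNIV s m \<and>
    (\<forall>x y z. m (m x y) z = m x (m y z)) \<and> (\<forall>x. m u x = x \<and> m x u = x)"

definition prod_scale :: "('k \<Rightarrow> 'a \<Rightarrow> 'a) \<Rightarrow> ('k \<Rightarrow> 'b \<Rightarrow> 'b) \<Rightarrow> 'k \<Rightarrow> 'a \<times> 'b \<Rightarrow> 'a \<times> 'b"
  where "prod_scale sA sB c p = (sA c (fst p), sB c (snd p))"

definition prod_mult :: "('a \<Rightarrow> 'a \<Rightarrow> 'a) \<Rightarrow> ('b \<Rightarrow> 'b \<Rightarrow> 'b) \<Rightarrow> 'a \<times> 'b \<Rightarrow> 'a \<times> 'b \<Rightarrow> 'a \<times> 'b"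
  where "prod_mult mA mB p q = (mA (fst p) (fst q), mB (snd p) (snd q))"

definition tensor_alg ::
  "('k::field \<Rightarrow> 'a::ab_group_add \<Rightarrow> 'a) \<Rightarrow> ('a \<Rightarrow> 'a \<Rightarrow> 'a) \<Rightarrow> 'a
   \<Rightarrow> ('k \<Rightarrow> 'b::ab_group_add \<Rightarrow> 'b) \<Rightarrow> ('b \<Rightarrow> 'b \<Rightarrow> 'b) \<Rightarrow> 'b
   \<Rightarrow> ('k \<Rightarrow> 'w::ab_group_add \<Rightarrow> 'w) \<Rightarrow> ('a \<Rightarrow> 'b \<Rightarrow> 'w) \<Rightarrow> ('w \<Rightarrow> 'w \<Rightarrow> 'w) \<Rightarrow> 'w \<Rightarrow> bool"
  where "tensor_alg sA mA uA sB mB uB sT tens mT uT \<longleftrightarrow>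
    is_tensor sA sB sT tens \<and> bilin_on sT UNIV sT UNIV sT mT \<and>
    (\<forall>a b a' b'. mT (tens a b) (tens a' b') = tens (mA a a') (mB b b')) \<and>
    uT = tens uA uB"

text \<open>Frobenius space E_A: all nearly Frobenius coproducts Delta : A -> A (x) A, where
  A (x) A is realized by (sAA, tAA) with algebra multiplication mAA.\<close>

definition frob_space ::
  "('k::field \<Rightarrow> 'a::ab_group_add \<Rightarrow> 'a) \<Rightarrow> ('a \<Rightarrow> 'a \<Rightarrow> 'a) \<Rightarrow> 'a
   \<Rightarrow> ('k \<Rightarrow> 'w::ab_group_add \<Rightarrow> 'w) \<Rightarrow> ('a \<Rightarrow> 'a \<Rightarrow> 'w) \<Rightarrow> ('w \<Rightarrow> 'w \<Rightarrow> 'w) \<Rightarrow> ('a \<Rightarrow> 'w) set"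
  where "frob_space s m u sAA tAA mAA =
    {\<Delta>. lin_on s UNIV sAA \<Delta> \<and>
         (\<forall>a b. \<Delta> (m a b) = mAA (tAA a u) (\<Delta> b) \<and> \<Delta> (m a b) = mAA (\<Delta> a) (tAA u b))}"

definition fun_scale :: "('k \<Rightarrow> 'w \<Rightarrow> 'w) \<Rightarrow> 'k \<Rightarrow> ('a \<Rightarrow> 'w) \<Rightarrow> 'a \<Rightarrow> 'w"
  where "fun_scale s c f = (\<lambda>x. s c (f x))"

definition edim :: "('k::field \<Rightarrow> 'v::ab_group_add \<Rightarrow> 'v) \<Rightarrow> 'v set \<Rightarrow> enat"
  where "edim s S = (if \<exists>B. finite B \<and> B \<subseteq> S \<and> module.span s B = S
                     then enat (vector_space.dim s S) else \<infinity>)"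

end

theory Submission
  imports Defs
begin

text \<open>A nearly Frobenius coproduct \<open>\<Delta>\<close> on \<open>A\<close> is determined by \<open>z = \<Delta> 1\<close>, as
  \<open>\<Delta> a = (a \<otimes> 1) z\<close>, and \<open>z\<close> ranges exactly over the tensors with
  \<open>(a \<otimes> 1) z = z (1 \<otimes> a)\<close>, the centre \<open>Z\<^sub>A\<close> of the bimodule \<open>A \<otimes> A\<close>.

  For \<open>A \<times> B\<close>, the central idempotents \<open>(1, 0)\<close> and \<open>(0, 1)\<close> cut a coproduct into its
  restrictions to the two corners, which are coproducts on \<open>A\<close> and on \<open>B\<close>, and the
  coproduct is the sum of their extensions.

  For \<open>A \<otimes> B\<close>, the canonical isomorphism \<open>(A \<otimes> A) \<otimes> (B \<otimes> B) \<cong> (A \<otimes> B) \<otimes> (A \<otimes> B)\<close>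
  is multiplicative, so it maps \<open>Z\<^sub>A \<otimes> Z\<^sub>B\<close> into \<open>Z\<^bsub>A \<otimes> B\<^esub>\<close>. Conversely,
  contracting an element of \<open>Z\<^bsub>A \<otimes> B\<^esub>\<close> with a functional on one factor gives an
  element of the centre of the other, which forces it into \<open>Z\<^sub>A \<otimes> Z\<^sub>B\<close>.\<close>

section \<open>Linear and bilinear maps\<close>

lemma vector_space_mult: "vector_space ((*) :: 'k::field \<Rightarrow> 'k \<Rightarrow> 'k)"
  by unfold_locales (auto simp: algebra_simps)

lemma vector_space_fun_scale: "vector_space s \<Longrightarrow> vector_space (fun_scale s)"
  unfolding vector_space_def fun_scale_def by (auto simp: fun_eq_iff)

lemma vector_space_prod_scale:
  "vector_space s1 \<Longrightarrow> vector_space s2 \<Longrightarrow> vector_space (prod_scale s1 s2)"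
  unfolding vector_space_def prod_scale_def by auto

lemma vs_linearI:
  "vector_space s1 \<Longrightarrow> vector_space s2 \<Longrightarrow> (\<And>x y. f (x + y) = f x + f y) \<Longrightarrow>
    (\<And>c x. f (s1 c x) = s2 c (f x)) \<Longrightarrow> Vector_Spaces.linear s1 s2 f"
  by (simp add: Vector_Spaces.linear_iff)

lemma
  assumes "Vector_Spaces.linear s1 s2 f"
  shows vs_linear_add: "f (x + y) = f x + f y"
    and vs_linear_scale: "f (s1 c x) = s2 c (f x)"
    and vs_linear_0: "f 0 = 0"
    and vs_linear_domain: "vector_space s1"
    and vs_linear_codomain: "vector_space s2"
proof -
  interpret Vector_Spaces.linear s1 s2 f by fact
  show "f (x + y) = f x + f y" "f (s1 c x) = s2 c (f x)" "f 0 = 0" "vector_space s1" "vector_space s2"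
    by (simp_all add: add scale vs1.vector_space_axioms vs2.vector_space_axioms)
qed

lemma vs_linear_compose:
  "Vector_Spaces.linear s1 s2 f \<Longrightarrow> Vector_Spaces.linear s2 s3 g \<Longrightarrow>
    Vector_Spaces.linear s1 s3 (\<lambda>x. g (f x))"
  using Vector_Spaces.linear_compose[of s1 s2 f s3 g] by (simp add: o_def)

lemma vs_linear_plus:
  assumes "Vector_Spaces.linear s1 s2 f" "Vector_Spaces.linear s1 s2 g"
  shows "Vector_Spaces.linear s1 s2 (\<lambda>x. f x + g x)"
proof -
  interpret vector_space_pair s1 s2
    using assms(1) by (simp add: Vector_Spaces.linear_iff vector_space_pair_def)
  show ?thesis by (rule linear_compose_add[OF assms])
qed

lemma vs_linear_smult:
  assumes "Vector_Spaces.linear s1 s2 f"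
  shows "Vector_Spaces.linear s1 s2 (\<lambda>x. s2 c (f x))"
proof -
  interpret vector_space_pair s1 s2
    using assms by (simp add: Vector_Spaces.linear_iff vector_space_pair_def)
  show ?thesis by (rule linear_compose_scale_right[OF assms])
qed

lemma vs_linear_zero_map:
  assumes "vector_space s1" "vector_space s2"
  shows "Vector_Spaces.linear s1 s2 (\<lambda>x. 0)"
proof -
  interpret vector_space_pair s1 s2 using assms by (simp add: vector_space_pair_def)
  show ?thesis by (rule linear_zero)
qed

lemma vs_linear_eval: "vector_space s \<Longrightarrow> Vector_Spaces.linear (fun_scale s) s (\<lambda>f. f z)"
  by (rule vs_linearI) (auto simp: vector_space_fun_scale fun_scale_def)

lemma vs_linear_eq_on_spanning:
  assumes "Vector_Spaces.linear s1 s2 f" "Vector_Spaces.linear s1 s2 g"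
    and "module.span s1 B = UNIV" "\<And>b. b \<in> B \<Longrightarrow> f b = g b"
  shows "f x = g x"
proof -
  interpret vector_space_pair s1 s2
    using assms(1) by (simp add: Vector_Spaces.linear_iff vector_space_pair_def)
  show ?thesis by (rule linear_eq_on[OF assms(1,2)]) (use assms(3,4) in auto)
qed

lemma lin_on_UNIV_iff:
  "vector_space s1 \<Longrightarrow> vector_space s2 \<Longrightarrow>
    lin_on s1 UNIV s2 f \<longleftrightarrow> Vector_Spaces.linear s1 s2 f"
  unfolding lin_on_def Vector_Spaces.linear_iff by auto

lemma lin_on_if_linear: "Vector_Spaces.linear s1 s2 f \<Longrightarrow> lin_on s1 S s2 f"
  unfolding lin_on_def Vector_Spaces.linear_iff by auto

lemma lin_on_compose_linear:
  "lin_on s1 S s2 f \<Longrightarrow> Vector_Spaces.linear s2 s3 h \<Longrightarrow> lin_on s1 S s3 (\<lambda>x. h (f x))"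
  unfolding lin_on_def Vector_Spaces.linear_iff by auto

lemma lin_on_eq_on_span:
  assumes "vector_space s1" "vector_space s2" "lin_on s1 S s2 f" "lin_on s1 S s2 g"
    and S: "module.span s1 B = S" and eq: "\<And>b. b \<in> B \<Longrightarrow> f b = g b" and x: "x \<in> S"
  shows "f x = g x"
proof -
  interpret v1: vector_space s1 by fact
  interpret v2: vector_space s2 by fact
  have zero: "0 \<in> S" using v1.span_zero S by blast
  have "f 0 = 0" "g 0 = 0"
    using assms(3,4) zero unfolding lin_on_def by (metis v1.scale_zero_left v2.scale_zero_left)+
  then have "v1.subspace {x \<in> S. f x = g x}"
    using assms(3,4) v1.subspace_span[of B] zero unfolding S lin_on_def v1.subspace_def by auto
  moreover have "B \<subseteq> {x \<in> S. f x = g x}" using eq v1.span_superset S by blast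
  ultimately show ?thesis using v1.span_minimal x S by blast
qed

definition bilin ::
  "('k::field \<Rightarrow> 'u::ab_group_add \<Rightarrow> 'u) \<Rightarrow> ('k \<Rightarrow> 'v::ab_group_add \<Rightarrow> 'v)
    \<Rightarrow> ('k \<Rightarrow> 'w::ab_group_add \<Rightarrow> 'w) \<Rightarrow> ('u \<Rightarrow> 'v \<Rightarrow> 'w) \<Rightarrow> bool"
  where "bilin s1 s2 s3 f \<longleftrightarrow>
    (\<forall>y. Vector_Spaces.linear s1 s3 (\<lambda>x. f x y)) \<and> (\<forall>x. Vector_Spaces.linear s2 s3 (f x))"

lemma bilin_on_UNIV_iff:
  "vector_space s1 \<Longrightarrow> vector_space s2 \<Longrightarrow> vector_space s3 \<Longrightarrow>
    bilin_on s1 UNIV s2 UNIV s3 f \<longleftrightarrow> bilin s1 s2 s3 f"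
  unfolding bilin_on_def bilin_def by (simp add: lin_on_UNIV_iff)

lemma bilin_on_if_bilin: "bilin s1 s2 s3 f \<Longrightarrow> bilin_on s1 S1 s2 S2 s3 f"
  unfolding bilin_def bilin_on_def by (auto intro: lin_on_if_linear)

lemma bilin_linear_left: "bilin s1 s2 s3 f \<Longrightarrow> Vector_Spaces.linear s1 s3 (\<lambda>x. f x y)"
  and bilin_linear_right: "bilin s1 s2 s3 f \<Longrightarrow> Vector_Spaces.linear s2 s3 (f x)"
  unfolding bilin_def by auto

lemma bilin_simps:
  assumes "bilin s1 s2 s3 f"
  shows "f (x + x') y = f x y + f x' y" "f (s1 c x) y = s3 c (f x y)"
    "f x (y + y') = f x y + f x y'" "f x (s2 c y) = s3 c (f x y)"
    "f 0 y = 0" "f x 0 = 0"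
  using vs_linear_add vs_linear_scale vs_linear_0
    bilin_linear_left[OF assms, of y] bilin_linear_right[OF assms, of x] by blast+

lemma bilinI:
  "vector_space s1 \<Longrightarrow> vector_space s2 \<Longrightarrow> vector_space s3 \<Longrightarrow>
    (\<And>x x' y. f (x + x') y = f x y + f x' y) \<Longrightarrow> (\<And>c x y. f (s1 c x) y = s3 c (f x y)) \<Longrightarrow>
    (\<And>x y y'. f x (y + y') = f x y + f x y') \<Longrightarrow> (\<And>c x y. f x (s2 c y) = s3 c (f x y)) \<Longrightarrow>
    bilin s1 s2 s3 f"
  unfolding bilin_def by (auto intro!: vs_linearI)

lemma bilin_compose_linear:
  "bilin s1 s2 s3 f \<Longrightarrow> Vector_Spaces.linear s3 s4 h \<Longrightarrow> bilin s1 s2 s4 (\<lambda>x y. h (f x y))"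
  unfolding bilin_def by (auto intro: vs_linear_compose)

lemma bilin_linear_compose:
  "bilin s1 s2 s3 f \<Longrightarrow> Vector_Spaces.linear r1 s1 g1 \<Longrightarrow> Vector_Spaces.linear r2 s2 g2 \<Longrightarrow>
    bilin r1 r2 s3 (\<lambda>x y. f (g1 x) (g2 y))"
  unfolding bilin_def by (auto intro: vs_linear_compose)

lemma bilin_mem_span:
  assumes f: "bilin s1 s2 s3 f" and x: "x \<in> module.span s1 X" and y: "y \<in> module.span s2 Y"
  shows "f x y \<in> module.span s3 {f a b |a b. a \<in> X \<and> b \<in> Y}"
proof -
  interpret v1: vector_space s1 using vs_linear_domain bilin_linear_left[OF f] .
  interpret v2: vector_space s2 using vs_linear_domain bilin_linear_right[OF f] .
  interpret v3: vector_space s3 using vs_linear_codomain bilin_linear_right[OF f] .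
  let ?T = "{f a b |a b. a \<in> X \<and> b \<in> Y}"
  have left_basis: "f a y \<in> v3.span ?T" if "a \<in> X" for a
    using y
  proof (induct rule: v2.span_induct)
    case (step b) with that show ?case by (auto intro!: v3.span_base)
  qed (auto simp: v2.subspace_def bilin_simps[OF f] intro: v3.span_add v3.span_scale v3.span_zero)
  show ?thesis
    using x
  proof (induct rule: v1.span_induct)
    case (step a) then show ?case by (rule left_basis)
  qed (auto simp: v1.subspace_def bilin_simps[OF f] intro: v3.span_add v3.span_scale v3.span_zero)
qed

lemma bilin_on_extend_from_bases:
  fixes \<theta> :: "'u::ab_group_add \<Rightarrow> 'v::ab_group_add \<Rightarrow> 'w::ab_group_add"
    and \<beta> :: "'u \<Rightarrow> 'v \<Rightarrow> 'z::ab_group_add"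
  assumes V: "vector_space s1" "vector_space s2" "vector_space s3" "vector_space s4"
    and B1: "module.span s1 B1 = S1" and B2: "module.span s2 B2 = S2"
    and \<theta>: "bilin_on s1 S1 s2 S2 s3 \<theta>"
    and inj: "inj_on (case_prod \<theta>) (B1 \<times> B2)"
    and ind: "module.independent s3 (case_prod \<theta> ` (B1 \<times> B2))"
    and \<beta>: "bilin_on s1 S1 s2 S2 s4 \<beta>"
  shows "\<exists>h. Vector_Spaces.linear s3 s4 h \<and> (\<forall>x\<in>S1. \<forall>y\<in>S2. h (\<theta> x y) = \<beta> x y)"
proof -
  interpret v1: vector_space s1 by fact
  interpret v2: vector_space s2 by fact
  interpret vp: vector_space_pair s3 s4 using V by (simp add: vector_space_pair_def)
  define h where
    "h = vp.construct (case_prod \<theta> ` (B1 \<times> B2)) (\<lambda>v. case_prod \<beta> (inv_into (B1 \<times> B2) (case_prod \<theta>) v))"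
  have h: "Vector_Spaces.linear s3 s4 h" unfolding h_def by (rule vp.linear_construct[OF ind])
  have on_bases: "h (\<theta> b1 b2) = \<beta> b1 b2" if "b1 \<in> B1" "b2 \<in> B2" for b1 b2
  proof -
    have "h (\<theta> b1 b2) = case_prod \<beta> (inv_into (B1 \<times> B2) (case_prod \<theta>) (case_prod \<theta> (b1, b2)))"
      unfolding h_def using that by (subst vp.construct_basis[OF ind]) auto
    also have "inv_into (B1 \<times> B2) (case_prod \<theta>) (case_prod \<theta> (b1, b2)) = (b1, b2)"
      using inv_into_f_f[OF inj] that by blast
    finally show ?thesis by simp
  qed
  have on_left_basis: "h (\<theta> x b2) = \<beta> x b2" if "x \<in> S1" "b2 \<in> B2" for x b2
  proof (rule lin_on_eq_on_span[OF V(1,4) _ _ B1 _ that(1)])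
    have "b2 \<in> S2" using that(2) B2 v2.span_superset by blast
    then show "lin_on s1 S1 s4 (\<lambda>x. h (\<theta> x b2))" "lin_on s1 S1 s4 (\<lambda>x. \<beta> x b2)"
      using \<theta> \<beta> h unfolding bilin_on_def by (auto intro: lin_on_compose_linear)
  qed (use on_bases that in blast)
  have "h (\<theta> x y) = \<beta> x y" if "x \<in> S1" "y \<in> S2" for x y
  proof (rule lin_on_eq_on_span[OF V(2,4) _ _ B2 _ that(2)])
    show "lin_on s2 S2 s4 (\<lambda>y. h (\<theta> x y))" "lin_on s2 S2 s4 (\<beta> x)"
      using \<theta> \<beta> h that(1) unfolding bilin_on_def by (auto intro: lin_on_compose_linear)
  qed (use on_left_basis that in blast)
  with h show ?thesis by blast
qed

lemma (in vector_space) extend_to_basis: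
  assumes "independent U"
  obtains B where "U \<subseteq> B" "independent B" "span B = UNIV"
proof -
  obtain B where "U \<subseteq> B" "independent B" "UNIV \<subseteq> span B"
    by (rule maximal_independent_subset_extend[OF subset_UNIV assms])
  with that show thesis by auto
qed

lemma (in vector_space) independent_if_separated:
  assumes "\<And>v. v \<in> I \<Longrightarrow>
    \<exists>h. Vector_Spaces.linear scale (*) h \<and> h v \<noteq> 0 \<and> (\<forall>w\<in>I - {v}. h w = 0)"
  shows "independent I"
  unfolding dependent_def
proof
  assume "\<exists>v\<in>I. v \<in> span (I - {v})"
  then obtain v where v: "v \<in> I" "v \<in> span (I - {v})" by blast
  then obtain h where h: "Vector_Spaces.linear scale (*) h" "h v \<noteq> 0" "\<forall>w\<in>I - {v}. h w = 0"
    using assms by blast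
  interpret Vector_Spaces.linear scale "(*)" h by (fact h(1))
  have "h v = 0" using eq_0_on_span[OF _ v(2)] h(3) by blast
  with h(2) show False by contradiction
qed

section \<open>Tensor products of vector spaces\<close>

locale tensor_product =
  fixes s1 :: "'k::field \<Rightarrow> 'u::ab_group_add \<Rightarrow> 'u" and s2 :: "'k \<Rightarrow> 'v::ab_group_add \<Rightarrow> 'v"
    and s3 :: "'k \<Rightarrow> 'w::ab_group_add \<Rightarrow> 'w" and tens :: "'u \<Rightarrow> 'v \<Rightarrow> 'w"
  assumes is_tensor: "is_tensor s1 s2 s3 tens"
begin

sublocale vs1: vector_space s1 using is_tensor by (simp add: is_tensor_def)
sublocale vs2: vector_space s2 using is_tensor by (simp add: is_tensor_def)
sublocale vs3: vector_space s3 using is_tensor by (simp add: is_tensor_def)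

lemma bilin_tens: "bilin s1 s2 s3 tens"
  using is_tensor bilin_on_UNIV_iff[OF vs1.vector_space_axioms vs2.vector_space_axioms
      vs3.vector_space_axioms]
  by (simp add: is_tensor_def is_tensor_on_def)

lemma span_tensors: "vs3.span {tens x y |x y. True} = UNIV"
  using is_tensor by (simp add: is_tensor_def is_tensor_on_def)

lemma scalar_extension_exists:
  "bilin s1 s2 (*) \<beta> \<Longrightarrow> \<exists>h. Vector_Spaces.linear s3 (*) h \<and> (\<forall>x y. h (tens x y) = \<beta> x y)"
  using is_tensor
    bilin_on_UNIV_iff[OF vs1.vector_space_axioms vs2.vector_space_axioms vector_space_mult]
    lin_on_UNIV_iff[OF vs3.vector_space_axioms vector_space_mult]
  by (simp add: is_tensor_def is_tensor_on_def)

lemma linear_eq_on_tensors: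
  assumes "Vector_Spaces.linear s3 s4 h1" "Vector_Spaces.linear s3 s4 h2"
    and "\<And>x y. h1 (tens x y) = h2 (tens x y)"
  shows "h1 w = h2 w"
  using vs_linear_eq_on_spanning[OF assms(1,2) span_tensors] assms(3) by blast

lemma coordinate_functional_exists:
  assumes B1: "vs1.independent B1" "vs1.span B1 = UNIV"
    and B2: "vs2.independent B2" "vs2.span B2 = UNIV"
    and b: "b1 \<in> B1" "b2 \<in> B2"
  obtains h where "Vector_Spaces.linear s3 (*) h"
    "\<And>c1 c2. c1 \<in> B1 \<Longrightarrow> c2 \<in> B2 \<Longrightarrow> h (tens c1 c2) = (if c1 = b1 \<and> c2 = b2 then 1 else 0)"
proof -
  let ?\<beta> = "\<lambda>x y. vs1.representation B1 x b1 * vs2.representation B2 y b2"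
  note r1 = vs1.linear_representation[OF B1, of b1] and r2 = vs2.linear_representation[OF B2, of b2]
  have "bilin s1 s2 (*) ?\<beta>"
    by (intro bilinI vs1.vector_space_axioms vs2.vector_space_axioms vector_space_mult)
      (simp_all add: vs_linear_add[OF r1] vs_linear_scale[OF r1] vs_linear_add[OF r2]
        vs_linear_scale[OF r2] algebra_simps)
  then obtain h where h: "Vector_Spaces.linear s3 (*) h" "\<And>x y. h (tens x y) = ?\<beta> x y"
    using scalar_extension_exists by blast
  show thesis
  proof (rule that[OF h(1)])
    fix c1 c2 assume c: "c1 \<in> B1" "c2 \<in> B2"
    show "h (tens c1 c2) = (if c1 = b1 \<and> c2 = b2 then 1 else 0)"
      using h(2) vs1.representation_basis[OF B1(1) c(1)] vs2.representation_basis[OF B2(1) c(2)]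
      by auto
  qed
qed

lemma tensor_basis:
  assumes B1: "vs1.independent B1" "vs1.span B1 = UNIV"
    and B2: "vs2.independent B2" "vs2.span B2 = UNIV"
  shows "inj_on (case_prod tens) (B1 \<times> B2)"
    and "vs3.independent (case_prod tens ` (B1 \<times> B2))"
    and "vs3.span (case_prod tens ` (B1 \<times> B2)) = UNIV"
proof -
  show inj: "inj_on (case_prod tens) (B1 \<times> B2)"
  proof (rule inj_onI, clarify)
    fix b1 b2 c1 c2
    assume b: "b1 \<in> B1" "b2 \<in> B2" "c1 \<in> B1" "c2 \<in> B2" and eq: "tens b1 b2 = tens c1 c2"
    obtain h :: "'w \<Rightarrow> 'k" where h: "\<And>d1 d2. d1 \<in> B1 \<Longrightarrow> d2 \<in> B2 \<Longrightarrow>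
        h (tens d1 d2) = (if d1 = b1 \<and> d2 = b2 then 1 else 0)"
      using coordinate_functional_exists[OF B1 B2 b(1,2)] by blast
    have "h (tens c1 c2) = 1" using h[OF b(1,2)] eq by simp
    then show "b1 = c1 \<and> b2 = c2" using h[OF b(3,4)] by (simp split: if_splits)
  qed
  show "vs3.independent (case_prod tens ` (B1 \<times> B2))"
  proof (rule vs3.independent_if_separated)
    fix v assume "v \<in> case_prod tens ` (B1 \<times> B2)"
    then obtain b1 b2 where b: "b1 \<in> B1" "b2 \<in> B2" and v: "v = tens b1 b2" by auto
    obtain h where h: "Vector_Spaces.linear s3 (*) h"
      "\<And>d1 d2. d1 \<in> B1 \<Longrightarrow> d2 \<in> B2 \<Longrightarrow> h (tens d1 d2) = (if d1 = b1 \<and> d2 = b2 then 1 else 0)"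
      using coordinate_functional_exists[OF B1 B2 b] by blast
    have "h w = 0" if w: "w \<in> case_prod tens ` (B1 \<times> B2) - {v}" for w
    proof -
      obtain d1 d2 where d: "d1 \<in> B1" "d2 \<in> B2" "w = tens d1 d2" "w \<noteq> v"
        using w by auto
      then show ?thesis using h(2)[OF d(1,2)] v by auto
    qed
    moreover have "h v \<noteq> 0" using h(2)[OF b] v by simp
    ultimately show "\<exists>h. Vector_Spaces.linear s3 (*) h \<and> h v \<noteq> 0 \<and>
        (\<forall>w\<in>case_prod tens ` (B1 \<times> B2) - {v}. h w = 0)" using h(1) by blast
  qed
  have "{tens a b |a b. a \<in> B1 \<and> b \<in> B2} = case_prod tens ` (B1 \<times> B2)" by auto
  then have "tens x y \<in> vs3.span (case_prod tens ` (B1 \<times> B2))" for x y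
    using bilin_mem_span[OF bilin_tens, of x B1 y B2] B1(2) B2(2) by simp
  then have "{tens x y |x y. True} \<subseteq> vs3.span (case_prod tens ` (B1 \<times> B2))" by blast
  from vs3.span_minimal[OF this vs3.subspace_span]
  show "vs3.span (case_prod tens ` (B1 \<times> B2)) = UNIV" unfolding span_tensors by blast
qed

lemma independent_tensors:
  assumes U: "vs1.independent U" and V: "vs2.independent V"
  shows "inj_on (case_prod tens) (U \<times> V)" and "vs3.independent (case_prod tens ` (U \<times> V))"
proof -
  obtain B1 where B1: "U \<subseteq> B1" "vs1.independent B1" "vs1.span B1 = UNIV"
    by (rule vs1.extend_to_basis[OF U])
  obtain B2 where B2: "V \<subseteq> B2" "vs2.independent B2" "vs2.span B2 = UNIV"
    by (rule vs2.extend_to_basis[OF V])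
  have sub: "U \<times> V \<subseteq> B1 \<times> B2" using B1(1) B2(1) by blast
  show "inj_on (case_prod tens) (U \<times> V)"
    using inj_on_subset[OF tensor_basis(1)[OF B1(2,3) B2(2,3)] sub] .
  show "vs3.independent (case_prod tens ` (U \<times> V))"
    using vs3.independent_mono[OF tensor_basis(2)[OF B1(2,3) B2(2,3)] image_mono[OF sub]] .
qed

lemma extension_exists:
  assumes "bilin s1 s2 s4 g"
  shows "\<exists>h. Vector_Spaces.linear s3 s4 h \<and> (\<forall>x y. h (tens x y) = g x y)"
proof -
  obtain B1 where B1: "vs1.independent B1" "vs1.span B1 = UNIV"
    using vs1.extend_to_basis[OF vs1.independent_empty] by blast
  obtain B2 where B2: "vs2.independent B2" "vs2.span B2 = UNIV"
    using vs2.extend_to_basis[OF vs2.independent_empty] by blast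
  have V4: "vector_space s4" using vs_linear_codomain bilin_linear_left[OF assms] .
  from bilin_on_extend_from_bases[OF vs1.vector_space_axioms vs2.vector_space_axioms
      vs3.vector_space_axioms V4 B1(2) B2(2) bilin_on_if_bilin[OF bilin_tens]
      tensor_basis(1,2)[OF B1 B2] bilin_on_if_bilin[OF assms]]
  show ?thesis by simp
qed

definition lift :: "('k \<Rightarrow> 'z::ab_group_add \<Rightarrow> 'z) \<Rightarrow> ('u \<Rightarrow> 'v \<Rightarrow> 'z) \<Rightarrow> 'w \<Rightarrow> 'z"
  where "lift s4 g = (SOME h. Vector_Spaces.linear s3 s4 h \<and> (\<forall>x y. h (tens x y) = g x y))"

lemma
  assumes "bilin s1 s2 s4 g"
  shows linear_lift: "Vector_Spaces.linear s3 s4 (lift s4 g)"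
    and lift_tens: "lift s4 g (tens x y) = g x y"
  using someI_ex[OF extension_exists[OF assms]] unfolding lift_def by auto

definition contract_right :: "('v \<Rightarrow> 'k) \<Rightarrow> 'w \<Rightarrow> 'u"
  where "contract_right \<phi> = lift s1 (\<lambda>x y. s1 (\<phi> y) x)"

definition contract_left :: "('u \<Rightarrow> 'k) \<Rightarrow> 'w \<Rightarrow> 'v"
  where "contract_left \<psi> = lift s2 (\<lambda>x y. s2 (\<psi> x) y)"

lemma
  assumes \<phi>: "Vector_Spaces.linear s2 (*) \<phi>"
  shows linear_contract_right: "Vector_Spaces.linear s3 s1 (contract_right \<phi>)"
    and contract_right_tens: "contract_right \<phi> (tens x y) = s1 (\<phi> y) x"
proof -
  have "bilin s1 s2 s1 (\<lambda>x y. s1 (\<phi> y) x)"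
    by (intro bilinI vs1.vector_space_axioms vs2.vector_space_axioms)
      (simp_all add: vs_linear_add[OF \<phi>] vs_linear_scale[OF \<phi>] vs1.scale_right_distrib
        vs1.scale_left_distrib mult.commute)
  then show "Vector_Spaces.linear s3 s1 (contract_right \<phi>)" "contract_right \<phi> (tens x y) = s1 (\<phi> y) x"
    unfolding contract_right_def by (rule linear_lift, rule lift_tens)
qed

lemma
  assumes \<psi>: "Vector_Spaces.linear s1 (*) \<psi>"
  shows linear_contract_left: "Vector_Spaces.linear s3 s2 (contract_left \<psi>)"
    and contract_left_tens: "contract_left \<psi> (tens x y) = s2 (\<psi> x) y"
proof -
  have "bilin s1 s2 s2 (\<lambda>x y. s2 (\<psi> x) y)"
    by (intro bilinI vs1.vector_space_axioms vs2.vector_space_axioms)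
      (simp_all add: vs_linear_add[OF \<psi>] vs_linear_scale[OF \<psi>] vs2.scale_right_distrib
        vs2.scale_left_distrib mult.commute)
  then show "Vector_Spaces.linear s3 s2 (contract_left \<psi>)" "contract_left \<psi> (tens x y) = s2 (\<psi> x) y"
    unfolding contract_left_def by (rule linear_lift, rule lift_tens)
qed

lemma representation_tensor_basis:
  assumes B1: "vs1.independent B1" "vs1.span B1 = UNIV"
    and B2: "vs2.independent B2" "vs2.span B2 = UNIV"
    and pq: "p \<in> B1" "q \<in> B2"
  shows "vs3.representation (case_prod tens ` (B1 \<times> B2)) w (tens p q) =
      vs1.representation B1 (contract_right (\<lambda>y. vs2.representation B2 y q) w) p"
    and "vs3.representation (case_prod tens ` (B1 \<times> B2)) w (tens p q) =
      vs2.representation B2 (contract_left (\<lambda>x. vs1.representation B1 x p) w) q"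
proof -
  let ?B = "case_prod tens ` (B1 \<times> B2)"
  let ?r1 = "\<lambda>x. vs1.representation B1 x p" and ?r2 = "\<lambda>y. vs2.representation B2 y q"
  note basis = tensor_basis[OF B1 B2]
  note r1 = vs1.linear_representation[OF B1, of p] and r2 = vs2.linear_representation[OF B2, of q]
  note r = vs3.linear_representation[OF basis(2,3), of "tens p q"]
  have on_basis: "vs3.representation ?B (tens p' q') (tens p q) = ?r1 p' * ?r2 q'"
    if "p' \<in> B1" "q' \<in> B2" for p' q'
  proof -
    have "tens p' q' \<in> ?B" using that by auto
    then have "vs3.representation ?B (tens p' q') (tens p q) = (if tens p q = tens p' q' then 1 else 0)"
      using vs3.representation_basis[OF basis(2)] by simp
    also have "(tens p q = tens p' q') \<longleftrightarrow> p = p' \<and> q = q'"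
      using inj_onD[OF basis(1), of "(p, q)" "(p', q')"] pq that by auto
    finally show ?thesis
      using vs1.representation_basis[OF B1(1) that(1)] vs2.representation_basis[OF B2(1) that(2)]
      by auto
  qed
  show "vs3.representation ?B w (tens p q) = ?r1 (contract_right ?r2 w)"
    by (rule vs_linear_eq_on_spanning[OF r vs_linear_compose[OF linear_contract_right[OF r2] r1]
          basis(3)])
      (auto simp: on_basis contract_right_tens[OF r2] vs_linear_scale[OF r1] mult.commute)
  show "vs3.representation ?B w (tens p q) = ?r2 (contract_left ?r1 w)"
    by (rule vs_linear_eq_on_spanning[OF r vs_linear_compose[OF linear_contract_left[OF r1] r2]
          basis(3)])
      (auto simp: on_basis contract_left_tens[OF r1] vs_linear_scale[OF r2])
qed

lemma mem_span_tensors_if_contractions: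
  assumes U: "vs1.independent U" and V: "vs2.independent V"
    and right: "\<And>\<phi>. Vector_Spaces.linear s2 (*) \<phi> \<Longrightarrow> contract_right \<phi> w \<in> vs1.span U"
    and left: "\<And>\<psi>. Vector_Spaces.linear s1 (*) \<psi> \<Longrightarrow> contract_left \<psi> w \<in> vs2.span V"
  shows "w \<in> vs3.span (case_prod tens ` (U \<times> V))"
proof -
  obtain B1 where B1: "U \<subseteq> B1" "vs1.independent B1" "vs1.span B1 = UNIV"
    by (rule vs1.extend_to_basis[OF U])
  obtain B2 where B2: "V \<subseteq> B2" "vs2.independent B2" "vs2.span B2 = UNIV"
    by (rule vs2.extend_to_basis[OF V])
  let ?B = "case_prod tens ` (B1 \<times> B2)"
  note basis = tensor_basis[OF B1(2,3) B2(2,3)]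
  \<comment> \<open>A coordinate of \<open>w\<close> is a coordinate of a contraction of \<open>w\<close>, so it vanishes
    outside \<open>U \<times> V\<close>.\<close>
  have support: "v \<in> case_prod tens ` (U \<times> V)" if v: "vs3.representation ?B w v \<noteq> 0" for v
  proof -
    obtain p q where pq: "p \<in> B1" "q \<in> B2" "v = tens p q"
      using vs3.representation_ne_zero[OF v] by auto
    let ?\<phi> = "\<lambda>y. vs2.representation B2 y q" and ?\<psi> = "\<lambda>x. vs1.representation B1 x p"
    have "vs1.representation B1 (contract_right ?\<phi> w) p \<noteq> 0"
      using v representation_tensor_basis(1)[OF B1(2,3) B2(2,3) pq(1,2)] pq(3) by simp
    moreover have "vs1.representation B1 (contract_right ?\<phi> w) = vs1.representation U (contract_right ?\<phi> w)"
      by (rule vs1.representation_extend[OF B1(2) right[OF vs2.linear_representation[OF B2(2,3)]] B1(1)])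
    ultimately have "p \<in> U" using vs1.representation_ne_zero by metis
    have "vs2.representation B2 (contract_left ?\<psi> w) q \<noteq> 0"
      using v representation_tensor_basis(2)[OF B1(2,3) B2(2,3) pq(1,2)] pq(3) by simp
    moreover have "vs2.representation B2 (contract_left ?\<psi> w) = vs2.representation V (contract_left ?\<psi> w)"
      by (rule vs2.representation_extend[OF B2(2) left[OF vs1.linear_representation[OF B1(2,3)]] B2(1)])
    ultimately have "q \<in> V" using vs2.representation_ne_zero by metis
    with \<open>p \<in> U\<close> pq(3) show ?thesis by auto
  qed
  have "(\<Sum>v | vs3.representation ?B w v \<noteq> 0. s3 (vs3.representation ?B w v) v)
      \<in> vs3.span (case_prod tens ` (U \<times> V))"
    using support by (intro vs3.span_sum vs3.span_scale vs3.span_base) auto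
  then show ?thesis using vs3.sum_nonzero_representation_eq[OF basis(2)] basis(3) by simp
qed

end

lemma tensor_productI:
  assumes V: "vector_space s1" "vector_space s2" "vector_space s3" and t: "bilin s1 s2 s3 t"
    and span: "module.span s3 {t x y |x y. True} = UNIV"
    and extension: "\<And>\<beta>. bilin s1 s2 (*) \<beta> \<Longrightarrow>
      \<exists>h. Vector_Spaces.linear s3 (*) h \<and> (\<forall>x y. h (t x y) = \<beta> x y)"
  shows "tensor_product s1 s2 s3 t"
  unfolding tensor_product_def is_tensor_def is_tensor_on_def
  using V t span extension bilin_on_UNIV_iff[OF V] bilin_on_UNIV_iff[OF V(1,2) vector_space_mult]
    lin_on_UNIV_iff[OF V(3) vector_space_mult]
  by simp

lemma tensor_pair_extension_exists:
  assumes T: "tensor_product s1 s2 s3 t" and Q: "tensor_product r1 r2 r3 q"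
    and G1: "\<And>a' b b'. Vector_Spaces.linear s1 s4 (\<lambda>a. G a a' b b')"
    and G2: "\<And>a b b'. Vector_Spaces.linear s2 s4 (\<lambda>a'. G a a' b b')"
    and G3: "\<And>a a' b'. Vector_Spaces.linear r1 s4 (\<lambda>b. G a a' b b')"
    and G4: "\<And>a a' b. Vector_Spaces.linear r2 s4 (\<lambda>b'. G a a' b b')"
  shows "\<exists>S. bilin s3 r3 s4 S \<and> (\<forall>a a' b b'. S (t a a') (q b b') = G a a' b b')"
proof -
  interpret T: tensor_product s1 s2 s3 t by fact
  interpret Q: tensor_product r1 r2 r3 q by fact
  have V4: "vector_space s4" using vs_linear_codomain G1 .
  have G12: "bilin s1 s2 s4 (\<lambda>a a'. G a a' b b')" for b b' using G1 G2 by (simp add: bilin_def)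
  \<comment> \<open>Lift in \<open>(a, a')\<close>, then in \<open>(b, b')\<close>; linearity of the lifts in the remaining
    arguments follows from uniqueness of lifts.\<close>
  define K where "K b b' = T.lift s4 (\<lambda>a a'. G a a' b b')" for b b'
  have K: "Vector_Spaces.linear s3 s4 (K b b')" and K_tens: "K b b' (t a a') = G a a' b b'"
    for a a' b b' unfolding K_def by (rule T.linear_lift[OF G12], rule T.lift_tens[OF G12])
  have K_bilin: "bilin r1 r2 s4 (\<lambda>b b'. K b b' w)" for w
  proof (rule bilinI[OF Q.vs1.vector_space_axioms Q.vs2.vector_space_axioms V4])
    show "K (b + b'') b' w = K b b' w + K b'' b' w" for b b'' b'
      by (rule T.linear_eq_on_tensors[OF K[of "b + b''" b'] vs_linear_plus[OF K K]])
        (simp add: K_tens vs_linear_add[OF G3])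
    show "K (r1 c b) b' w = s4 c (K b b' w)" for c b b'
      by (rule T.linear_eq_on_tensors[OF K[of "r1 c b" b'] vs_linear_smult[OF K]])
        (simp add: K_tens vs_linear_scale[OF G3])
    show "K b (b' + b'') w = K b b' w + K b b'' w" for b b' b''
      by (rule T.linear_eq_on_tensors[OF K[of b "b' + b''"] vs_linear_plus[OF K K]])
        (simp add: K_tens vs_linear_add[OF G4])
    show "K b (r2 c b') w = s4 c (K b b' w)" for c b b'
      by (rule T.linear_eq_on_tensors[OF K[of b "r2 c b'"] vs_linear_smult[OF K]])
        (simp add: K_tens vs_linear_scale[OF G4])
  qed
  define S where "S w = Q.lift s4 (\<lambda>b b'. K b b' w)" for w
  have S: "Vector_Spaces.linear r3 s4 (S w)" and S_tens: "S w (q b b') = K b b' w" for w b b'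
    unfolding S_def by (rule Q.linear_lift[OF K_bilin], rule Q.lift_tens[OF K_bilin])
  have "bilin s3 r3 s4 S"
  proof (rule bilinI[OF T.vs3.vector_space_axioms Q.vs3.vector_space_axioms V4])
    show "S (w + w') z = S w z + S w' z" for w w' z
      by (rule Q.linear_eq_on_tensors[OF S[of "w + w'"] vs_linear_plus[OF S S]])
        (simp add: S_tens vs_linear_add[OF K])
    show "S (s3 c w) z = s4 c (S w z)" for c w z
      by (rule Q.linear_eq_on_tensors[OF S[of "s3 c w"] vs_linear_smult[OF S]])
        (simp add: S_tens vs_linear_scale[OF K])
  qed (simp_all add: vs_linear_add[OF S] vs_linear_scale[OF S])
  moreover have "S (t a a') (q b b') = G a a' b b'" for a a' b b' by (simp add: S_tens K_tens)
  ultimately show ?thesis by blast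
qed

lemma bilin_eq_on_tensor_pairs:
  assumes T: "tensor_product s1 s2 s3 t" and Q: "tensor_product r1 r2 r3 q"
    and f: "bilin s3 r3 s4 f" and g: "bilin s3 r3 s4 g"
    and eq: "\<And>a a' b b'. f (t a a') (q b b') = g (t a a') (q b b')"
  shows "f w z = g w z"
proof -
  interpret T: tensor_product s1 s2 s3 t by fact
  interpret Q: tensor_product r1 r2 r3 q by fact
  have "f w (q b b') = g w (q b b')" for b b'
    by (rule T.linear_eq_on_tensors[OF bilin_linear_left[OF f] bilin_linear_left[OF g]]) (rule eq)
  then show ?thesis
    by (rule Q.linear_eq_on_tensors[OF bilin_linear_right[OF f] bilin_linear_right[OF g]])
qed

context
  fixes sA :: "'k::field \<Rightarrow> 'a::ab_group_add \<Rightarrow> 'a" and sB :: "'k \<Rightarrow> 'b::ab_group_add \<Rightarrow> 'b"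
    and sAA :: "'k \<Rightarrow> 'aa::ab_group_add \<Rightarrow> 'aa" and sBB :: "'k \<Rightarrow> 'bb::ab_group_add \<Rightarrow> 'bb"
    and sT :: "'k \<Rightarrow> 't::ab_group_add \<Rightarrow> 't" and sTT :: "'k \<Rightarrow> 'tt::ab_group_add \<Rightarrow> 'tt"
    and tAA tBB tT tTT
  assumes AA: "tensor_product sA sA sAA tAA" and BB: "tensor_product sB sB sBB tBB"
    and T: "tensor_product sA sB sT tT" and TT: "tensor_product sT sT sTT tTT"
begin

interpretation AA: tensor_product sA sA sAA tAA by (fact AA)
interpretation BB: tensor_product sB sB sBB tBB by (fact BB)
interpretation T: tensor_product sA sB sT tT by (fact T)
interpretation TT: tensor_product sT sT sTT tTT by (fact TT)

lemma shuffle_bilin_exists: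
  obtains S where "bilin sAA sBB sTT S"
    and "\<And>a a' b b'. S (tAA a a') (tBB b b') = tTT (tT a b) (tT a' b')"
proof -
  note t = T.bilin_tens and tt = TT.bilin_tens
  have "\<exists>S. bilin sAA sBB sTT S \<and> (\<forall>a a' b b'. S (tAA a a') (tBB b b') = tTT (tT a b) (tT a' b'))"
    by (rule tensor_pair_extension_exists[OF AA BB])
      (rule vs_linear_compose[OF bilin_linear_left[OF t] bilin_linear_left[OF tt]]
        vs_linear_compose[OF bilin_linear_left[OF t] bilin_linear_right[OF tt]]
        vs_linear_compose[OF bilin_linear_right[OF t] bilin_linear_left[OF tt]]
        vs_linear_compose[OF bilin_linear_right[OF t] bilin_linear_right[OF tt]])+
  with that show thesis by blast
qed

lemma shuffle_span:
  assumes S_tens: "\<And>a a' b b'. S (tAA a a') (tBB b b') = tTT (tT a b) (tT a' b')"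
  shows "TT.vs3.span {S x y |x y. True} = UNIV"
proof -
  let ?T = "{tT a b |a b. True}"
  have sub: "{tTT p r |p r. p \<in> ?T \<and> r \<in> ?T} \<subseteq> {S x y |x y. True}"
  proof
    fix v assume "v \<in> {tTT p r |p r. p \<in> ?T \<and> r \<in> ?T}"
    then obtain a b a' b' where "v = tTT (tT a b) (tT a' b')" by blast
    then show "v \<in> {S x y |x y. True}" unfolding S_tens[symmetric] by blast
  qed
  have "tTT x y \<in> TT.vs3.span {tTT p r |p r. p \<in> ?T \<and> r \<in> ?T}" for x y
    by (rule bilin_mem_span[OF TT.bilin_tens]) (simp_all only: T.span_tensors UNIV_I)
  then have "tTT x y \<in> TT.vs3.span {S x y |x y. True}" for x y
    using TT.vs3.span_mono[OF sub] by blast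
  then have "{tTT x y |x y. True} \<subseteq> TT.vs3.span {S x y |x y. True}" by blast
  from TT.vs3.span_minimal[OF this TT.vs3.subspace_span]
  show ?thesis unfolding TT.span_tensors by blast
qed

lemma shuffle_scalar_extension:
  assumes S: "bilin sAA sBB sTT S"
    and S_tens: "\<And>a a' b b'. S (tAA a a') (tBB b b') = tTT (tT a b) (tT a' b')"
    and \<beta>: "bilin sAA sBB (*) \<beta>"
  shows "\<exists>h. Vector_Spaces.linear sTT (*) h \<and> (\<forall>x y. h (S x y) = \<beta> x y)"
proof -
  have "\<exists>\<gamma>. bilin sT sT (*) \<gamma> \<and>
      (\<forall>a b a' b'. \<gamma> (tT a b) (tT a' b') = \<beta> (tAA a a') (tBB b b'))"
    by (rule tensor_pair_extension_exists[OF T T])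
      (rule vs_linear_compose[OF bilin_linear_left[OF AA.bilin_tens] bilin_linear_left[OF \<beta>]]
        vs_linear_compose[OF bilin_linear_left[OF BB.bilin_tens] bilin_linear_right[OF \<beta>]]
        vs_linear_compose[OF bilin_linear_right[OF AA.bilin_tens] bilin_linear_left[OF \<beta>]]
        vs_linear_compose[OF bilin_linear_right[OF BB.bilin_tens] bilin_linear_right[OF \<beta>]])+
  then obtain \<gamma> where \<gamma>: "bilin sT sT (*) \<gamma>"
    and \<gamma>_tens: "\<And>a b a' b'. \<gamma> (tT a b) (tT a' b') = \<beta> (tAA a a') (tBB b b')"
    by blast
  obtain h where h: "Vector_Spaces.linear sTT (*) h" and h_tens: "\<And>x y. h (tTT x y) = \<gamma> x y"
    using TT.scalar_extension_exists[OF \<gamma>] by blast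
  have "h (S x y) = \<beta> x y" for x y
    by (rule bilin_eq_on_tensor_pairs[OF AA BB bilin_compose_linear[OF S h] \<beta>])
      (simp add: S_tens h_tens \<gamma>_tens)
  with h show ?thesis by blast
qed

lemma tensor_shuffle_exists:
  obtains S where "tensor_product sAA sBB sTT S"
    and "\<And>a a' b b'. S (tAA a a') (tBB b b') = tTT (tT a b) (tT a' b')"
proof -
  obtain S where S: "bilin sAA sBB sTT S"
    and S_tens: "\<And>a a' b b'. S (tAA a a') (tBB b b') = tTT (tT a b) (tT a' b')"
    using shuffle_bilin_exists by blast
  have "tensor_product sAA sBB sTT S"
    by (rule tensor_productI[OF AA.vs3.vector_space_axioms BB.vs3.vector_space_axioms
          TT.vs3.vector_space_axioms S shuffle_span[OF S_tens] shuffle_scalar_extension[OF S S_tens]])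
  with S_tens that show thesis by blast
qed

end

section \<open>Dimension\<close>

lemma (in vector_space) basis_of_subspace:
  assumes "subspace S"
  obtains B where "independent B" "span B = S"
proof -
  obtain B where B: "B \<subseteq> S" "independent B" "S \<subseteq> span B"
    by (rule maximal_independent_subset[of S])
  with span_subspace[OF B(1,3) assms] that show thesis by blast
qed

lemma (in vector_space) edim_eq_card_basis:
  assumes B: "independent B" "span B = S"
  shows "edim scale S = (if finite B then enat (card B) else \<infinity>)"
proof (cases "finite B")
  case True
  have "span B = span S" by (simp add: B(2)[symmetric] span_span)
  then have "dim S = card B" using dim_eq_card B(1) by blast
  moreover have "\<exists>C. finite C \<and> C \<subseteq> S \<and> span C = S" using True B span_superset by blast
  ultimately show ?thesis unfolding edim_def using True by simp
next
  case False
  have "\<not> finite C" if "C \<subseteq> S" "span C = S" for C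
    using independent_span_bound[of C B] B span_superset that False by auto
  then show ?thesis unfolding edim_def using False by auto
qed

lemma edim_linear_image:
  assumes f: "Vector_Spaces.linear s1 s2 f" and S: "module.subspace s1 S" and inj: "inj_on f S"
  shows "edim s2 (f ` S) = edim s1 S"
proof -
  interpret vector_space_pair s1 s2
    using f by (simp add: Vector_Spaces.linear_iff vector_space_pair_def)
  obtain B where B: "vs1.independent B" "vs1.span B = S" by (rule vs1.basis_of_subspace[OF S])
  have "inj_on f B" using inj B(2) vs1.span_superset inj_on_subset by blast
  moreover have "vs2.independent (f ` B)"
    by (rule linear_independent_injective_image[OF f B(1)]) (simp only: B(2) inj)
  moreover have "vs2.span (f ` B) = f ` S" using linear_span_image[OF f, of B] B(2) by simp
  ultimately show ?thesis
    using vs2.edim_eq_card_basis[of "f ` B"] vs1.edim_eq_card_basis[OF B]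
    by (simp add: finite_image_iff card_image)
qed

lemma
  fixes s1 :: "'k::field \<Rightarrow> 'u::ab_group_add \<Rightarrow> 'u" and s2 :: "'k \<Rightarrow> 'v::ab_group_add \<Rightarrow> 'v"
  assumes "vector_space s1" "vector_space s2"
  shows span_inclusions_Times: "module.span (prod_scale s1 s2) ((\<lambda>x. (x, 0)) ` X \<union> (\<lambda>y. (0, y)) ` Y)
      = module.span s1 X \<times> module.span s2 Y"
    and independent_inclusions_Times: "module.independent s1 X \<Longrightarrow> module.independent s2 Y \<Longrightarrow>
      module.independent (prod_scale s1 s2) ((\<lambda>x. (x, 0)) ` X \<union> (\<lambda>y. (0, y)) ` Y)"
proof -
  interpret v1: vector_space s1 by fact
  interpret v2: vector_space s2 by fact
  interpret v: vector_space "prod_scale s1 s2" by (rule vector_space_prod_scale) fact+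
  interpret p1: vector_space_pair s1 "prod_scale s1 s2" ..
  interpret p2: vector_space_pair s2 "prod_scale s1 s2" ..
  have l1: "Vector_Spaces.linear s1 (prod_scale s1 s2) (\<lambda>x. (x, 0))"
    by (intro vs_linearI v1.vector_space_axioms v.vector_space_axioms) (auto simp: prod_scale_def)
  have l2: "Vector_Spaces.linear s2 (prod_scale s1 s2) (\<lambda>y. (0, y))"
    by (intro vs_linearI v2.vector_space_axioms v.vector_space_axioms) (auto simp: prod_scale_def)
  show span: "v.span ((\<lambda>x. (x, 0)) ` X \<union> (\<lambda>y. (0, y)) ` Y) = v1.span X \<times> v2.span Y" for X Y
    unfolding v.span_Un p1.linear_span_image[OF l1] p2.linear_span_image[OF l2] by force
  assume X: "v1.independent X" and Y: "v2.independent Y"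
  have "0 \<notin> X" "0 \<notin> Y" using X Y v1.dependent_zero v2.dependent_zero by blast+
  let ?C1 = "(\<lambda>x. (x, 0::'v)) ` X" and ?C2 = "(\<lambda>y. (0::'u, y)) ` Y"
  show "v.independent (?C1 \<union> ?C2)"
    unfolding v.dependent_def
  proof safe
    fix a assume a: "a \<in> X" and "(a, 0) \<in> v.span (?C1 \<union> ?C2 - {(a, 0)})"
    moreover have "?C1 \<union> ?C2 - {(a, 0)} = (\<lambda>x. (x, 0)) ` (X - {a}) \<union> ?C2"
      using a \<open>0 \<notin> X\<close> by auto
    ultimately have "a \<in> v1.span (X - {a})" using span[of "X - {a}" Y] by auto
    with a X show False unfolding v1.dependent_def by blast
  next
    fix b assume b: "b \<in> Y" and "(0, b) \<in> v.span (?C1 \<union> ?C2 - {(0, b)})"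
    moreover have "?C1 \<union> ?C2 - {(0, b)} = ?C1 \<union> (\<lambda>y. (0, y)) ` (Y - {b})"
      using b \<open>0 \<notin> Y\<close> by auto
    ultimately have "b \<in> v2.span (Y - {b})" using span[of X "Y - {b}"] by auto
    with b Y show False unfolding v2.dependent_def by blast
  qed
qed

lemma edim_Times:
  fixes s1 :: "'k::field \<Rightarrow> 'u::ab_group_add \<Rightarrow> 'u" and s2 :: "'k \<Rightarrow> 'v::ab_group_add \<Rightarrow> 'v"
  assumes V: "vector_space s1" "vector_space s2"
    and S: "module.subspace s1 S" and T: "module.subspace s2 T"
  shows "edim (prod_scale s1 s2) (S \<times> T) = edim s1 S + edim s2 T"
proof -
  interpret v1: vector_space s1 by fact
  interpret v2: vector_space s2 by fact
  interpret v: vector_space "prod_scale s1 s2" by (rule vector_space_prod_scale) fact+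
  obtain B1 where B1: "v1.independent B1" "v1.span B1 = S" by (rule v1.basis_of_subspace[OF S])
  obtain B2 where B2: "v2.independent B2" "v2.span B2 = T" by (rule v2.basis_of_subspace[OF T])
  let ?C1 = "(\<lambda>x. (x, 0::'v)) ` B1" and ?C2 = "(\<lambda>y. (0::'u, y)) ` B2"
  have "0 \<notin> B1" using B1(1) v1.dependent_zero by blast
  then have disj: "?C1 \<inter> ?C2 = {}" by auto
  have inj: "inj_on (\<lambda>x. (x, 0::'v)) B1" "inj_on (\<lambda>y. (0::'u, y)) B2" by (auto simp: inj_on_def)
  have fin: "finite (?C1 \<union> ?C2) \<longleftrightarrow> finite B1 \<and> finite B2"
    using inj by (simp add: finite_image_iff)
  have card: "card (?C1 \<union> ?C2) = card B1 + card B2" if "finite B1" "finite B2"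
    using that inj disj by (simp add: card_Un_disjoint card_image)
  show ?thesis
    unfolding v.edim_eq_card_basis[OF independent_inclusions_Times[OF V B1(1) B2(1)]
        span_inclusions_Times[OF V, of B1 B2, unfolded B1(2) B2(2)]]
      v1.edim_eq_card_basis[OF B1] v2.edim_eq_card_basis[OF B2]
    using fin card by auto
qed

lemma tensor_on_if_bases:
  fixes s1 :: "'k::field \<Rightarrow> 'u::ab_group_add \<Rightarrow> 'u"
    and \<theta> :: "'u \<Rightarrow> 'v::ab_group_add \<Rightarrow> 'w::ab_group_add"
  assumes V: "vector_space s1" "vector_space s2" "vector_space s3"
    and B1: "module.independent s1 B1" "module.span s1 B1 = S1"
    and B2: "module.independent s2 B2" "module.span s2 B2 = S2"
    and into: "\<forall>x\<in>S1. \<forall>y\<in>S2. \<theta> x y \<in> S3" and \<theta>: "bilin_on s1 S1 s2 S2 s3 \<theta>"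
    and inj: "inj_on (case_prod \<theta>) (B1 \<times> B2)"
    and B3: "module.independent s3 (case_prod \<theta> ` (B1 \<times> B2))"
      "module.span s3 (case_prod \<theta> ` (B1 \<times> B2)) = S3"
  shows "is_tensor_on s1 S1 s2 S2 s3 S3 \<theta>"
    and "edim s3 S3 = edim s1 S1 * edim s2 S2"
proof -
  interpret v1: vector_space s1 by fact
  interpret v2: vector_space s2 by fact
  interpret v3: vector_space s3 by fact
  have "B1 \<subseteq> S1" "B2 \<subseteq> S2"
    using v1.span_superset[of B1] v2.span_superset[of B2] B1(2) B2(2) by simp_all
  have S3: "v3.subspace S3" unfolding B3(2)[symmetric] by (rule v3.subspace_span)
  have "v3.span {\<theta> x y |x y. x \<in> S1 \<and> y \<in> S2} = S3"
  proof
    show "v3.span {\<theta> x y |x y. x \<in> S1 \<and> y \<in> S2} \<subseteq> S3"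
      by (rule v3.span_minimal[OF _ S3]) (use into in blast)
    have "case_prod \<theta> ` (B1 \<times> B2) \<subseteq> {\<theta> x y |x y. x \<in> S1 \<and> y \<in> S2}"
      using \<open>B1 \<subseteq> S1\<close> \<open>B2 \<subseteq> S2\<close> by auto
    from v3.span_mono[OF this] show "S3 \<subseteq> v3.span {\<theta> x y |x y. x \<in> S1 \<and> y \<in> S2}"
      unfolding B3(2) .
  qed
  moreover have "\<exists>h. lin_on s3 S3 (*) h \<and> (\<forall>x\<in>S1. \<forall>y\<in>S2. h (\<theta> x y) = \<beta> x y)"
    if "bilin_on s1 S1 s2 S2 (*) \<beta>" for \<beta> :: "'u \<Rightarrow> 'v \<Rightarrow> 'k"
    using bilin_on_extend_from_bases[OF V vector_space_mult B1(2) B2(2) \<theta> inj B3(1) that]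
    by (blast intro: lin_on_if_linear)
  ultimately show "is_tensor_on s1 S1 s2 S2 s3 S3 \<theta>"
    unfolding is_tensor_on_def using into \<theta> by blast
  have "edim s3 S3 = (if finite (B1 \<times> B2) then enat (card (B1 \<times> B2)) else \<infinity>)"
    using v3.edim_eq_card_basis[OF B3] inj by (simp add: finite_image_iff card_image)
  then show "edim s3 S3 = edim s1 S1 * edim s2 S2"
    unfolding v1.edim_eq_card_basis[OF B1] v2.edim_eq_card_basis[OF B2]
    by (auto simp: finite_cartesian_product_iff card_cartesian_product zero_enat_def)
qed

section \<open>Algebras and nearly Frobenius coproducts\<close>

lemma
  assumes "kalg s m u"
  shows kalg_vector_space: "vector_space s"
    and kalg_bilin: "bilin s s s m"
    and kalg_assoc: "m (m x y) z = m x (m y z)"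
    and kalg_unit_left: "m u x = x"
    and kalg_unit_right: "m x u = x"
  using assms unfolding kalg_def by (auto simp: bilin_on_UNIV_iff)

lemma
  assumes "tensor_alg s1 m1 u1 s2 m2 u2 s3 t m3 u3"
  shows tensor_alg_tensor_product: "tensor_product s1 s2 s3 t"
    and tensor_alg_bilin: "bilin s3 s3 s3 m3"
    and tensor_alg_mult_tens: "m3 (t a b) (t a' b') = t (m1 a a') (m2 b b')"
    and tensor_alg_unit: "u3 = t u1 u2"
proof -
  show T: "tensor_product s1 s2 s3 t"
    using assms by (simp add: tensor_alg_def tensor_product_def)
  interpret tensor_product s1 s2 s3 t by (fact T)
  show "bilin s3 s3 s3 m3" "m3 (t a b) (t a' b') = t (m1 a a') (m2 b b')" "u3 = t u1 u2"
    using assms bilin_on_UNIV_iff[OF vs3.vector_space_axioms vs3.vector_space_axioms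
        vs3.vector_space_axioms]
    by (simp_all add: tensor_alg_def)
qed

lemma kalg_prod:
  assumes A: "kalg sA mA uA" and B: "kalg sB mB uB"
  shows "kalg (prod_scale sA sB) (prod_mult mA mB) (uA, uB)"
proof -
  have V: "vector_space (prod_scale sA sB)"
    by (rule vector_space_prod_scale[OF kalg_vector_space[OF A] kalg_vector_space[OF B]])
  have "bilin (prod_scale sA sB) (prod_scale sA sB) (prod_scale sA sB) (prod_mult mA mB)"
    by (rule bilinI[OF V V V])
      (simp_all add: prod_mult_def prod_scale_def bilin_simps[OF kalg_bilin[OF A]]
        bilin_simps[OF kalg_bilin[OF B]])
  then show ?thesis
    unfolding kalg_def using V bilin_on_UNIV_iff[OF V V V]
    by (simp add: prod_mult_def kalg_assoc[OF A] kalg_assoc[OF B] kalg_unit_left[OF A]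
        kalg_unit_left[OF B] kalg_unit_right[OF A] kalg_unit_right[OF B])
qed

lemma kalg_tensor:
  assumes A: "kalg s1 m1 u1" and B: "kalg s2 m2 u2"
    and T: "tensor_alg s1 m1 u1 s2 m2 u2 s3 t m3 u3"
  shows "kalg s3 m3 u3"
proof -
  interpret tensor_product s1 s2 s3 t by (rule tensor_alg_tensor_product[OF T])
  note mult = tensor_alg_bilin[OF T] and mult_tens = tensor_alg_mult_tens[OF T]
  note L = bilin_linear_left[OF mult] and R = bilin_linear_right[OF mult]
  have assoc_tens: "m3 (m3 (t a b) (t a' b')) z = m3 (t a b) (m3 (t a' b') z)" for a b a' b' z
    by (rule linear_eq_on_tensors[OF R vs_linear_compose[OF R R]])
      (simp add: mult_tens kalg_assoc[OF A] kalg_assoc[OF B])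
  have assoc_tens2: "m3 (m3 (t a b) y) z = m3 (t a b) (m3 y z)" for a b y z
    by (rule linear_eq_on_tensors[OF vs_linear_compose[OF R L] vs_linear_compose[OF L R]])
      (simp add: assoc_tens)
  have "m3 (m3 x y) z = m3 x (m3 y z)" for x y z
    by (rule linear_eq_on_tensors[OF vs_linear_compose[OF L L] L]) (simp add: assoc_tens2)
  moreover have "m3 u3 x = x" for x
    by (rule linear_eq_on_tensors[OF R vs3.linear_ident])
      (simp add: mult_tens tensor_alg_unit[OF T] kalg_unit_left[OF A] kalg_unit_left[OF B])
  moreover have "m3 x u3 = x" for x
    by (rule linear_eq_on_tensors[OF L vs3.linear_ident])
      (simp add: mult_tens tensor_alg_unit[OF T] kalg_unit_right[OF A] kalg_unit_right[OF B])
  ultimately show ?thesis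
    unfolding kalg_def using vs3.vector_space_axioms mult
      bilin_on_UNIV_iff[OF vs3.vector_space_axioms vs3.vector_space_axioms vs3.vector_space_axioms]
    by simp
qed

text \<open>The set \<open>central_tensors\<close> is the centre of the \<open>A\<close>-bimodule \<open>A \<otimes> A\<close> with
  \<open>a \<cdot> z \<cdot> b = (a \<otimes> 1) z (1 \<otimes> b)\<close>; evaluation at \<open>1\<close> identifies \<open>\<E>\<^sub>A\<close> with it.\<close>

locale frobenius_setting =
  fixes s :: "'k::field \<Rightarrow> 'a::ab_group_add \<Rightarrow> 'a" and m :: "'a \<Rightarrow> 'a \<Rightarrow> 'a" and u :: 'a
    and s2 :: "'k \<Rightarrow> 'aa::ab_group_add \<Rightarrow> 'aa" and t :: "'a \<Rightarrow> 'a \<Rightarrow> 'aa"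
    and m2 :: "'aa \<Rightarrow> 'aa \<Rightarrow> 'aa" and u2 :: 'aa
  assumes alg: "kalg s m u"
    and square: "tensor_alg s m u s m u s2 t m2 u2"
begin

sublocale sq: tensor_product s s s2 t by (rule tensor_alg_tensor_product[OF square])

lemma alg_square: "kalg s2 m2 u2"
  by (rule kalg_tensor[OF alg alg square])

lemma mult_tens: "m2 (t a b) (t a' b') = t (m a a') (m b b')"
  by (rule tensor_alg_mult_tens[OF square])

lemma unit_square: "u2 = t u u"
  by (rule tensor_alg_unit[OF square])

lemmas mult_bilin = kalg_bilin[OF alg] and mult_square_bilin = tensor_alg_bilin[OF square]
  and assoc = kalg_assoc[OF alg] and unit_left = kalg_unit_left[OF alg]
  and unit_right = kalg_unit_right[OF alg] and assoc_square = kalg_assoc[OF alg_square]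

abbreviation E :: "('a \<Rightarrow> 'aa) set" where "E \<equiv> frob_space s m u s2 t m2"

definition central_tensors :: "'aa set"
  where "central_tensors = {z. \<forall>a. m2 (t a u) z = m2 z (t u a)}"

definition frob_of :: "'aa \<Rightarrow> 'a \<Rightarrow> 'aa"
  where "frob_of z = (\<lambda>a. m2 (t a u) z)"

lemma frob_space_iff:
  "\<Delta> \<in> E \<longleftrightarrow> Vector_Spaces.linear s s2 \<Delta> \<and>
     (\<forall>a b. \<Delta> (m a b) = m2 (t a u) (\<Delta> b)) \<and> (\<forall>a b. \<Delta> (m a b) = m2 (\<Delta> a) (t u b))"
  unfolding frob_space_def lin_on_UNIV_iff[OF sq.vs1.vector_space_axioms sq.vs3.vector_space_axioms]
  by blast

lemma frob_space_add:
  assumes "\<Delta> \<in> E" "\<Delta>' \<in> E"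
  shows "\<Delta> + \<Delta>' \<in> E"
proof -
  from assms have x: "Vector_Spaces.linear s s2 \<Delta>" "\<And>a b. \<Delta> (m a b) = m2 (t a u) (\<Delta> b)"
      "\<And>a b. \<Delta> (m a b) = m2 (\<Delta> a) (t u b)"
    and y: "Vector_Spaces.linear s s2 \<Delta>'" "\<And>a b. \<Delta>' (m a b) = m2 (t a u) (\<Delta>' b)"
      "\<And>a b. \<Delta>' (m a b) = m2 (\<Delta>' a) (t u b)"
    unfolding frob_space_iff by blast+
  note M = bilin_simps[OF mult_square_bilin]
  show ?thesis
    unfolding frob_space_iff plus_fun_def
  proof (intro conjI allI)
    show "Vector_Spaces.linear s s2 (\<lambda>a. \<Delta> a + \<Delta>' a)" by (rule vs_linear_plus[OF x(1) y(1)])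
    fix a b
    show "\<Delta> (m a b) + \<Delta>' (m a b) = m2 (t a u) (\<Delta> b + \<Delta>' b)" by (simp add: x(2) y(2) M)
    show "\<Delta> (m a b) + \<Delta>' (m a b) = m2 (\<Delta> a + \<Delta>' a) (t u b)" by (simp add: x(3) y(3) M)
  qed
qed

lemma frob_space_scale:
  assumes "\<Delta> \<in> E"
  shows "fun_scale s2 c \<Delta> \<in> E"
proof -
  from assms have x: "Vector_Spaces.linear s s2 \<Delta>" "\<And>a b. \<Delta> (m a b) = m2 (t a u) (\<Delta> b)"
      "\<And>a b. \<Delta> (m a b) = m2 (\<Delta> a) (t u b)"
    unfolding frob_space_iff by blast+
  note M = bilin_simps[OF mult_square_bilin]
  show ?thesis
    unfolding frob_space_iff fun_scale_def
  proof (intro conjI allI)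
    show "Vector_Spaces.linear s s2 (\<lambda>a. s2 c (\<Delta> a))" by (rule vs_linear_smult[OF x(1)])
    fix a b
    show "s2 c (\<Delta> (m a b)) = m2 (t a u) (s2 c (\<Delta> b))" by (simp add: x(2) M)
    show "s2 c (\<Delta> (m a b)) = m2 (s2 c (\<Delta> a)) (t u b)" by (simp add: x(3) M)
  qed
qed

lemma subspace_frob_space: "module.subspace (fun_scale s2) E"
proof -
  interpret vf: vector_space "fun_scale s2"
    by (rule vector_space_fun_scale[OF sq.vs3.vector_space_axioms])
  have "0 \<in> E"
    unfolding frob_space_iff
    using vs_linear_zero_map[OF sq.vs1.vector_space_axioms sq.vs3.vector_space_axioms]
    by (simp add: zero_fun_def bilin_simps[OF mult_square_bilin])
  then show ?thesis by (intro vf.subspaceI frob_space_add frob_space_scale)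
qed

lemma subspace_central_tensors: "sq.vs3.subspace central_tensors"
  unfolding sq.vs3.subspace_def central_tensors_def by (auto simp: bilin_simps[OF mult_square_bilin])

lemma linear_frob_of: "Vector_Spaces.linear s2 (fun_scale s2) frob_of"
  by (rule vs_linearI[OF sq.vs3.vector_space_axioms vector_space_fun_scale[OF sq.vs3.vector_space_axioms]])
    (simp_all add: frob_of_def fun_eq_iff fun_scale_def bilin_simps[OF mult_square_bilin])

lemma frob_of_unit: "frob_of z u = z"
  unfolding frob_of_def unit_square[symmetric] by (rule kalg_unit_left[OF alg_square])

lemma frob_of_frob_unit:
  assumes "\<Delta> \<in> E"
  shows "frob_of (\<Delta> u) = \<Delta>"
proof
  fix a
  have "\<Delta> (m a u) = m2 (t a u) (\<Delta> u)" using assms unfolding frob_space_iff by blast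
  then show "frob_of (\<Delta> u) a = \<Delta> a" by (simp add: frob_of_def unit_right)
qed

lemma frob_unit_central:
  assumes "\<Delta> \<in> E"
  shows "\<Delta> u \<in> central_tensors"
proof -
  have eqs: "\<And>a b. \<Delta> (m a b) = m2 (t a u) (\<Delta> b)" "\<And>a b. \<Delta> (m a b) = m2 (\<Delta> a) (t u b)"
    using assms unfolding frob_space_iff by blast+
  have "m2 (t a u) (\<Delta> u) = m2 (\<Delta> u) (t u a)" for a
  proof -
    have "m2 (t a u) (\<Delta> u) = \<Delta> (m a u)" by (rule eqs(1)[symmetric])
    also have "\<dots> = \<Delta> (m u a)" by (simp add: unit_left unit_right)
    also have "\<dots> = m2 (\<Delta> u) (t u a)" by (rule eqs(2))
    finally show ?thesis .
  qed
  then show ?thesis unfolding central_tensors_def by blast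
qed

lemma frob_of_central:
  assumes z: "z \<in> central_tensors"
  shows "frob_of z \<in> E"
  unfolding frob_space_iff
proof (intro conjI allI)
  have tens_mult: "t (m a b) u = m2 (t a u) (t b u)" for a b
    by (simp add: mult_tens unit_left)
  show "Vector_Spaces.linear s s2 (frob_of z)"
    unfolding frob_of_def
    by (rule vs_linear_compose[OF bilin_linear_left[OF sq.bilin_tens] bilin_linear_left[OF mult_square_bilin]])
  fix a b
  show "frob_of z (m a b) = m2 (t a u) (frob_of z b)"
    by (simp add: frob_of_def tens_mult assoc_square)
  have central: "m2 (t b u) z = m2 z (t u b)" using z unfolding central_tensors_def by blast
  have "frob_of z (m a b) = m2 (t a u) (m2 (t b u) z)" by (simp add: frob_of_def tens_mult assoc_square)
  also have "\<dots> = m2 (frob_of z a) (t u b)" by (simp add: central frob_of_def assoc_square)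
  finally show "frob_of z (m a b) = m2 (frob_of z a) (t u b)" .
qed

lemma bij_betw_frob_of: "bij_betw frob_of central_tensors E"
proof (rule bij_betw_byWitness[of _ "\<lambda>\<Delta>. \<Delta> u"])
  show "\<forall>z\<in>central_tensors. frob_of z u = z" by (simp add: frob_of_unit)
  show "\<forall>\<Delta>\<in>E. frob_of (\<Delta> u) = \<Delta>" by (simp add: frob_of_frob_unit)
  show "frob_of ` central_tensors \<subseteq> E" using frob_of_central by blast
  show "(\<lambda>\<Delta>. \<Delta> u) ` E \<subseteq> central_tensors" using frob_unit_central by blast
qed

lemma bij_betw_eval_unit: "bij_betw (\<lambda>\<Delta>. \<Delta> u) E central_tensors"
proof (rule bij_betw_byWitness[of _ frob_of])
  show "\<forall>\<Delta>\<in>E. frob_of (\<Delta> u) = \<Delta>" by (simp add: frob_of_frob_unit)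
  show "\<forall>z\<in>central_tensors. frob_of z u = z" by (simp add: frob_of_unit)
  show "(\<lambda>\<Delta>. \<Delta> u) ` E \<subseteq> central_tensors" using frob_unit_central by blast
  show "frob_of ` central_tensors \<subseteq> E" using frob_of_central by blast
qed

lemma basis_central_tensors:
  assumes D: "module.independent (fun_scale s2) D" "module.span (fun_scale s2) D = E"
  shows "sq.vs3.independent ((\<lambda>\<Delta>. \<Delta> u) ` D)"
    and "sq.vs3.span ((\<lambda>\<Delta>. \<Delta> u) ` D) = central_tensors"
proof -
  interpret vector_space_pair "fun_scale s2" s2
    using vector_space_fun_scale sq.vs3.vector_space_axioms by (simp add: vector_space_pair_def)
  note ev = vs_linear_eval[OF sq.vs3.vector_space_axioms, of u]
  show "sq.vs3.independent ((\<lambda>\<Delta>. \<Delta> u) ` D)"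
    using linear_independent_injective_image[OF ev D(1)] bij_betw_imp_inj_on[OF bij_betw_eval_unit] D(2)
    by simp
  show "sq.vs3.span ((\<lambda>\<Delta>. \<Delta> u) ` D) = central_tensors"
    using linear_span_image[OF ev, of D] D(2) bij_betw_imp_surj_on[OF bij_betw_eval_unit] by simp
qed

end

section \<open>Product algebras\<close>

text \<open>The corner \<open>e C e\<close> of an algebra \<open>C\<close> at the central idempotent \<open>e = incl 1\<close>,
  identified with the algebra \<open>A\<close> via \<open>proj\<close> and \<open>incl\<close>.\<close>

locale algebra_corner =
  C: frobenius_setting sC mC uC sCC tC mCC uCC + A: frobenius_setting sA mA uA sAA tAA mAA uAA
  for sC :: "'k::field \<Rightarrow> 'c::ab_group_add \<Rightarrow> 'c" and mC uC
    and sCC :: "'k \<Rightarrow> 'cc::ab_group_add \<Rightarrow> 'cc" and tC mCC uCC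
    and sA :: "'k \<Rightarrow> 'a::ab_group_add \<Rightarrow> 'a" and mA uA
    and sAA :: "'k \<Rightarrow> 'aa::ab_group_add \<Rightarrow> 'aa" and tAA mAA uAA +
  fixes proj :: "'c \<Rightarrow> 'a" and incl :: "'a \<Rightarrow> 'c"
  assumes linear_proj: "Vector_Spaces.linear sC sA proj"
    and linear_incl: "Vector_Spaces.linear sA sC incl"
    and proj_mult: "proj (mC c c') = mA (proj c) (proj c')"
    and proj_unit: "proj uC = uA"
    and incl_mult: "incl (mA a a') = mC (incl a) (incl a')"
    and proj_incl: "proj (incl a) = a"
    and incl_proj_left: "incl (proj c) = mC (incl uA) c"
    and incl_proj_right: "incl (proj c) = mC c (incl uA)"
begin

definition proj2 :: "'cc \<Rightarrow> 'aa"
  where "proj2 = C.sq.lift sAA (\<lambda>x y. tAA (proj x) (proj y))"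

definition incl2 :: "'aa \<Rightarrow> 'cc"
  where "incl2 = A.sq.lift sCC (\<lambda>a a'. tC (incl a) (incl a'))"

lemma
  shows linear_proj2: "Vector_Spaces.linear sCC sAA proj2"
    and proj2_tens: "proj2 (tC x y) = tAA (proj x) (proj y)"
  using bilin_linear_compose[OF A.sq.bilin_tens linear_proj linear_proj]
  unfolding proj2_def by (rule C.sq.linear_lift, rule C.sq.lift_tens)

lemma
  shows linear_incl2: "Vector_Spaces.linear sAA sCC incl2"
    and incl2_tens: "incl2 (tAA a a') = tC (incl a) (incl a')"
  using bilin_linear_compose[OF C.sq.bilin_tens linear_incl linear_incl]
  unfolding incl2_def by (rule A.sq.linear_lift, rule A.sq.lift_tens)

lemma mult_incl_left: "mC c (incl a) = incl (mA (proj c) a)"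
proof -
  have "incl (mA (proj c) a) = mC (mC c (incl uA)) (incl a)"
    by (simp add: incl_mult flip: incl_proj_right)
  also have "\<dots> = mC c (incl a)" by (simp add: C.assoc A.unit_left flip: incl_mult)
  finally show ?thesis ..
qed

lemma mult_incl_right: "mC (incl a) c = incl (mA a (proj c))"
proof -
  have "incl (mA a (proj c)) = mC (incl a) (mC (incl uA) c)"
    by (simp add: incl_mult flip: incl_proj_left)
  also have "\<dots> = mC (incl a) c" by (simp add: A.unit_right flip: C.assoc incl_mult)
  finally show ?thesis ..
qed

lemma proj2_incl2: "proj2 (incl2 w) = w"
  by (rule A.sq.linear_eq_on_tensors[OF vs_linear_compose[OF linear_incl2 linear_proj2]
        A.sq.vs3.linear_ident])
    (simp add: incl2_tens proj2_tens proj_incl)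

lemma incl2_proj2: "incl2 (proj2 w) = mCC (mCC (tC (incl uA) uC) w) (tC uC (incl uA))"
proof (rule C.sq.linear_eq_on_tensors[OF vs_linear_compose[OF linear_proj2 linear_incl2]
      vs_linear_compose[OF bilin_linear_right[OF C.mult_square_bilin]
        bilin_linear_left[OF C.mult_square_bilin]]])
  fix x y
  show "incl2 (proj2 (tC x y)) = mCC (mCC (tC (incl uA) uC) (tC x y)) (tC uC (incl uA))"
    using incl_proj_left[of x] incl_proj_right[of y]
    by (simp add: proj2_tens incl2_tens C.mult_tens C.unit_left C.unit_right)
qed

lemma proj2_mult_left: "proj2 (mCC (tC c uC) w) = mAA (tAA (proj c) uA) (proj2 w)"
  by (rule C.sq.linear_eq_on_tensors[OF
        vs_linear_compose[OF bilin_linear_right[OF C.mult_square_bilin] linear_proj2]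
        vs_linear_compose[OF linear_proj2 bilin_linear_right[OF A.mult_square_bilin]]])
    (simp add: proj2_tens C.mult_tens A.mult_tens proj_mult C.unit_left A.unit_left)

lemma proj2_mult_right: "proj2 (mCC w (tC uC c)) = mAA (proj2 w) (tAA uA (proj c))"
  by (rule C.sq.linear_eq_on_tensors[OF
        vs_linear_compose[OF bilin_linear_left[OF C.mult_square_bilin] linear_proj2]
        vs_linear_compose[OF linear_proj2 bilin_linear_left[OF A.mult_square_bilin]]])
    (simp add: proj2_tens C.mult_tens A.mult_tens proj_mult C.unit_right A.unit_right)

lemma incl2_mult_left: "incl2 (mAA (tAA (proj c) uA) w) = mCC (tC c uC) (incl2 w)"
  by (rule A.sq.linear_eq_on_tensors[OF
        vs_linear_compose[OF bilin_linear_right[OF A.mult_square_bilin] linear_incl2]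
        vs_linear_compose[OF linear_incl2 bilin_linear_right[OF C.mult_square_bilin]]])
    (simp add: incl2_tens C.mult_tens A.mult_tens mult_incl_left proj_unit C.unit_left A.unit_left)

lemma incl2_mult_right: "incl2 (mAA w (tAA uA (proj c))) = mCC (incl2 w) (tC uC c)"
  by (rule A.sq.linear_eq_on_tensors[OF
        vs_linear_compose[OF bilin_linear_left[OF A.mult_square_bilin] linear_incl2]
        vs_linear_compose[OF linear_incl2 bilin_linear_left[OF C.mult_square_bilin]]])
    (simp add: incl2_tens C.mult_tens A.mult_tens mult_incl_right proj_unit C.unit_right A.unit_right)

definition restrict :: "('c \<Rightarrow> 'cc) \<Rightarrow> 'a \<Rightarrow> 'aa"
  where "restrict \<Delta> = (\<lambda>a. proj2 (\<Delta> (incl a)))"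

definition extend :: "('a \<Rightarrow> 'aa) \<Rightarrow> 'c \<Rightarrow> 'cc"
  where "extend D = (\<lambda>c. incl2 (D (proj c)))"

lemma linear_restrict: "Vector_Spaces.linear (fun_scale sCC) (fun_scale sAA) restrict"
  by (rule vs_linearI[OF vector_space_fun_scale[OF C.sq.vs3.vector_space_axioms]
        vector_space_fun_scale[OF A.sq.vs3.vector_space_axioms]])
    (simp_all add: restrict_def fun_scale_def fun_eq_iff vs_linear_add[OF linear_proj2]
      vs_linear_scale[OF linear_proj2])

lemma restrict_frob:
  assumes "\<Delta> \<in> C.E"
  shows "restrict \<Delta> \<in> A.E"
proof -
  from assms have \<Delta>: "Vector_Spaces.linear sC sCC \<Delta>"
    and left: "\<And>x y. \<Delta> (mC x y) = mCC (tC x uC) (\<Delta> y)"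
    and right: "\<And>x y. \<Delta> (mC x y) = mCC (\<Delta> x) (tC uC y)"
    unfolding C.frob_space_iff by blast+
  show ?thesis
    unfolding A.frob_space_iff restrict_def
  proof (intro conjI allI)
    show "Vector_Spaces.linear sA sAA (\<lambda>a. proj2 (\<Delta> (incl a)))"
      by (rule vs_linear_compose[OF vs_linear_compose[OF linear_incl \<Delta>] linear_proj2])
    fix a b
    show "proj2 (\<Delta> (incl (mA a b))) = mAA (tAA a uA) (proj2 (\<Delta> (incl b)))"
      by (simp add: incl_mult left proj2_mult_left proj_incl)
    show "proj2 (\<Delta> (incl (mA a b))) = mAA (proj2 (\<Delta> (incl a))) (tAA uA b)"
      by (simp add: incl_mult right proj2_mult_right proj_incl)
  qed
qed

lemma extend_frob:
  assumes "D \<in> A.E"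
  shows "extend D \<in> C.E"
proof -
  from assms have D: "Vector_Spaces.linear sA sAA D"
    and left: "\<And>a b. D (mA a b) = mAA (tAA a uA) (D b)"
    and right: "\<And>a b. D (mA a b) = mAA (D a) (tAA uA b)"
    unfolding A.frob_space_iff by blast+
  show ?thesis
    unfolding C.frob_space_iff extend_def
  proof (intro conjI allI)
    show "Vector_Spaces.linear sC sCC (\<lambda>c. incl2 (D (proj c)))"
      by (rule vs_linear_compose[OF vs_linear_compose[OF linear_proj D] linear_incl2])
    fix c c'
    show "incl2 (D (proj (mC c c'))) = mCC (tC c uC) (incl2 (D (proj c')))"
      by (simp add: proj_mult left incl2_mult_left)
    show "incl2 (D (proj (mC c c'))) = mCC (incl2 (D (proj c))) (tC uC c')"
      by (simp add: proj_mult right incl2_mult_right)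
  qed
qed

lemma restrict_extend: "restrict (extend D) = D"
  by (simp add: restrict_def extend_def proj_incl proj2_incl2)

lemma extend_restrict:
  assumes "\<Delta> \<in> C.E"
  shows "extend (restrict \<Delta>) c = \<Delta> (incl (proj c))"
proof -
  from assms have left: "\<And>x y. \<Delta> (mC x y) = mCC (tC x uC) (\<Delta> y)"
    and right: "\<And>x y. \<Delta> (mC x y) = mCC (\<Delta> x) (tC uC y)"
    unfolding C.frob_space_iff by blast+
  let ?x = "incl (proj c)" and ?e = "incl uA"
  have "mC ?e (mC ?x ?e) = ?x" by (simp add: A.unit_left A.unit_right flip: incl_mult)
  then have "\<Delta> ?x = mCC (mCC (tC ?e uC) (\<Delta> ?x)) (tC uC ?e)"
    using left[of ?e "mC ?x ?e"] right[of ?x ?e] by (simp add: C.assoc_square)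
  then show ?thesis by (simp add: extend_def restrict_def proj_incl incl2_proj2)
qed

end

locale product_setting =
  A: frobenius_setting sA mA uA sAA tAA mAA uAA + B: frobenius_setting sB mB uB sBB tBB mBB uBB
  for sA :: "'k::field \<Rightarrow> 'a::ab_group_add \<Rightarrow> 'a" and mA uA
    and sAA :: "'k \<Rightarrow> 'aa::ab_group_add \<Rightarrow> 'aa" and tAA mAA uAA
    and sB :: "'k \<Rightarrow> 'b::ab_group_add \<Rightarrow> 'b" and mB uB
    and sBB :: "'k \<Rightarrow> 'bb::ab_group_add \<Rightarrow> 'bb" and tBB mBB uBB +
  fixes sP :: "'k \<Rightarrow> 'p::ab_group_add \<Rightarrow> 'p" and tP mP uP
  assumes square_prod: "tensor_alg (prod_scale sA sB) (prod_mult mA mB) (uA, uB)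
    (prod_scale sA sB) (prod_mult mA mB) (uA, uB) sP tP mP uP"
begin

sublocale P: frobenius_setting "prod_scale sA sB" "prod_mult mA mB" "(uA, uB)" sP tP mP uP
  by unfold_locales (rule kalg_prod[OF A.alg B.alg], rule square_prod)

sublocale cA: algebra_corner "prod_scale sA sB" "prod_mult mA mB" "(uA, uB)" sP tP mP uP
  sA mA uA sAA tAA mAA uAA fst "\<lambda>a. (a, 0)"
  by unfold_locales
    (auto intro: vs_linearI P.sq.vs1.vector_space_axioms A.sq.vs1.vector_space_axioms
      simp: prod_scale_def prod_mult_def bilin_simps[OF B.mult_bilin] A.unit_left A.unit_right)

sublocale cB: algebra_corner "prod_scale sA sB" "prod_mult mA mB" "(uA, uB)" sP tP mP uP
  sB mB uB sBB tBB mBB uBB snd "\<lambda>b. (0, b)"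
  by unfold_locales
    (auto intro: vs_linearI P.sq.vs1.vector_space_axioms B.sq.vs1.vector_space_axioms
      simp: prod_scale_def prod_mult_def bilin_simps[OF A.mult_bilin] B.unit_left B.unit_right)

lemma restrict_extend_other:
  assumes "Vector_Spaces.linear sB sBB D" "Vector_Spaces.linear sA sAA D'"
  shows "cA.restrict (cB.extend D) = 0" and "cB.restrict (cA.extend D') = 0"
  using vs_linear_0[OF assms(1)] vs_linear_0[OF assms(2)]
    vs_linear_0[OF cA.linear_proj2] vs_linear_0[OF cB.linear_proj2]
    vs_linear_0[OF cA.linear_incl2] vs_linear_0[OF cB.linear_incl2]
  by (simp_all add: cA.restrict_def cB.restrict_def cA.extend_def cB.extend_def zero_fun_def)

definition split_corners :: "('a \<times> 'b \<Rightarrow> 'p) \<Rightarrow> ('a \<Rightarrow> 'aa) \<times> ('b \<Rightarrow> 'bb)"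
  where "split_corners \<Delta> = (cA.restrict \<Delta>, cB.restrict \<Delta>)"

definition join_corners :: "('a \<Rightarrow> 'aa) \<times> ('b \<Rightarrow> 'bb) \<Rightarrow> 'a \<times> 'b \<Rightarrow> 'p"
  where "join_corners D = cA.extend (fst D) + cB.extend (snd D)"

lemma linear_split_corners:
  "Vector_Spaces.linear (fun_scale sP) (prod_scale (fun_scale sAA) (fun_scale sBB)) split_corners"
  using cA.linear_restrict cB.linear_restrict
  by (intro vs_linearI vector_space_fun_scale vector_space_prod_scale P.sq.vs3.vector_space_axioms
      A.sq.vs3.vector_space_axioms B.sq.vs3.vector_space_axioms)
    (simp_all add: split_corners_def prod_scale_def vs_linear_add vs_linear_scale)

lemma join_split_corners:
  assumes \<Delta>: "\<Delta> \<in> P.E"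
  shows "join_corners (split_corners \<Delta>) = \<Delta>"
proof
  fix c :: "'a \<times> 'b"
  have lin: "Vector_Spaces.linear (prod_scale sA sB) sP \<Delta>"
    using \<Delta> unfolding P.frob_space_iff by blast
  have "join_corners (split_corners \<Delta>) c = \<Delta> (fst c, 0) + \<Delta> (0, snd c)"
    using cA.extend_restrict[OF \<Delta>] cB.extend_restrict[OF \<Delta>]
    by (simp add: join_corners_def split_corners_def)
  also have "\<dots> = \<Delta> c" using vs_linear_add[OF lin, of "(fst c, 0)" "(0, snd c)"] by simp
  finally show "join_corners (split_corners \<Delta>) c = \<Delta> c" .
qed

lemma split_join_corners:
  assumes "D \<in> A.E \<times> B.E"
  shows "split_corners (join_corners D) = D"
proof -
  have "fst D \<in> A.E" "snd D \<in> B.E" using assms by auto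
  then have D: "Vector_Spaces.linear sA sAA (fst D)" and D': "Vector_Spaces.linear sB sBB (snd D)"
    unfolding A.frob_space_iff B.frob_space_iff by blast+
  have "cA.restrict (join_corners D) = fst D"
    unfolding join_corners_def vs_linear_add[OF cA.linear_restrict]
    by (simp add: cA.restrict_extend restrict_extend_other(1)[OF D' D])
  moreover have "cB.restrict (join_corners D) = snd D"
    unfolding join_corners_def vs_linear_add[OF cB.linear_restrict]
    by (simp add: cB.restrict_extend restrict_extend_other(2)[OF D' D])
  ultimately show ?thesis by (simp add: split_corners_def)
qed

lemma bij_betw_split_corners: "bij_betw split_corners P.E (A.E \<times> B.E)"
proof (rule bij_betw_byWitness[of _ join_corners])
  show "\<forall>\<Delta>\<in>P.E. join_corners (split_corners \<Delta>) = \<Delta>" by (simp add: join_split_corners)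
  show "\<forall>D\<in>A.E \<times> B.E. split_corners (join_corners D) = D" by (simp add: split_join_corners)
  show "split_corners ` P.E \<subseteq> A.E \<times> B.E"
    using cA.restrict_frob cB.restrict_frob by (auto simp: split_corners_def)
  show "join_corners ` (A.E \<times> B.E) \<subseteq> P.E"
    using P.frob_space_add cA.extend_frob cB.extend_frob by (auto simp: join_corners_def)
qed

lemma edim_frob_space_prod:
  "edim (fun_scale sP) P.E = edim (fun_scale sAA) A.E + edim (fun_scale sBB) B.E"
proof -
  note bij = bij_betw_split_corners
  have "edim (fun_scale sP) P.E = edim (prod_scale (fun_scale sAA) (fun_scale sBB)) (A.E \<times> B.E)"
    using edim_linear_image[OF linear_split_corners P.subspace_frob_space bij_betw_imp_inj_on[OF bij]]
      bij_betw_imp_surj_on[OF bij]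
    by simp
  also have "\<dots> = edim (fun_scale sAA) A.E + edim (fun_scale sBB) B.E"
    by (rule edim_Times[OF vector_space_fun_scale vector_space_fun_scale A.subspace_frob_space
          B.subspace_frob_space]) (rule A.sq.vs3.vector_space_axioms B.sq.vs3.vector_space_axioms)+
  finally show ?thesis .
qed

end

section \<open>Tensor product algebras\<close>

locale tensor_setting =
  A: frobenius_setting sA mA uA sAA tAA mAA uAA + B: frobenius_setting sB mB uB sBB tBB mBB uBB
  for sA :: "'k::field \<Rightarrow> 'a::ab_group_add \<Rightarrow> 'a" and mA uA
    and sAA :: "'k \<Rightarrow> 'aa::ab_group_add \<Rightarrow> 'aa" and tAA mAA uAA
    and sB :: "'k \<Rightarrow> 'b::ab_group_add \<Rightarrow> 'b" and mB uB
    and sBB :: "'k \<Rightarrow> 'bb::ab_group_add \<Rightarrow> 'bb" and tBB mBB uBB +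
  fixes sT :: "'k \<Rightarrow> 't::ab_group_add \<Rightarrow> 't" and tT mT uT
    and sTT :: "'k \<Rightarrow> 'tt::ab_group_add \<Rightarrow> 'tt" and tTT mTT uTT
    and S :: "'aa \<Rightarrow> 'bb \<Rightarrow> 'tt"
  assumes tensor: "tensor_alg sA mA uA sB mB uB sT tT mT uT"
    and square_tensor: "tensor_alg sT mT uT sT mT uT sTT tTT mTT uTT"
    and shuffle: "tensor_product sAA sBB sTT S"
    and shuffle_tens: "S (tAA a a') (tBB b b') = tTT (tT a b) (tT a' b')"
begin

sublocale T: frobenius_setting sT mT uT sTT tTT mTT uTT
  by unfold_locales (rule kalg_tensor[OF A.alg B.alg tensor], rule square_tensor)

sublocale AB: tensor_product sA sB sT tT by (rule tensor_alg_tensor_product[OF tensor])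

sublocale Sh: tensor_product sAA sBB sTT S by (rule shuffle)

lemma shuffle_mult: "mTT (S p q) (S p' q') = S (mAA p p') (mBB q q')"
proof -
  note A = A.sq.tensor_product_axioms and B = B.sq.tensor_product_axioms
  note mult_tens = tensor_alg_mult_tens[OF tensor]
  have "mTT (S p q) (S (tAA a a') (tBB b b')) = S (mAA p (tAA a a')) (mBB q (tBB b b'))"
    for a a' b b'
    by (rule bilin_eq_on_tensor_pairs[OF A B
          bilin_compose_linear[OF Sh.bilin_tens bilin_linear_left[OF T.mult_square_bilin]]
          bilin_linear_compose[OF Sh.bilin_tens bilin_linear_left[OF A.mult_square_bilin]
            bilin_linear_left[OF B.mult_square_bilin]]])
      (simp add: shuffle_tens T.mult_tens mult_tens A.mult_tens B.mult_tens)
  then show ?thesis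
    by (rule bilin_eq_on_tensor_pairs[OF A B
          bilin_compose_linear[OF Sh.bilin_tens bilin_linear_right[OF T.mult_square_bilin]]
          bilin_linear_compose[OF Sh.bilin_tens bilin_linear_right[OF A.mult_square_bilin]
            bilin_linear_right[OF B.mult_square_bilin]]])
qed

lemma
  shows tens_unit_shuffle: "tTT (tT a b) uT = S (tAA a uA) (tBB b uB)"
    and unit_tens_shuffle: "tTT uT (tT a b) = S (tAA uA a) (tBB uB b)"
  by (simp_all add: shuffle_tens tensor_alg_unit[OF tensor])

lemma shuffle_central:
  assumes z: "z \<in> A.central_tensors" and z': "z' \<in> B.central_tensors"
  shows "S z z' \<in> T.central_tensors"
proof -
  have "mTT (tTT x uT) (S z z') = mTT (S z z') (tTT uT x)" for x
  proof (rule AB.linear_eq_on_tensors[OF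
        vs_linear_compose[OF bilin_linear_left[OF T.sq.bilin_tens] bilin_linear_left[OF T.mult_square_bilin]]
        vs_linear_compose[OF bilin_linear_right[OF T.sq.bilin_tens] bilin_linear_right[OF T.mult_square_bilin]]])
    fix a b
    have "mAA (tAA a uA) z = mAA z (tAA uA a)" "mBB (tBB b uB) z' = mBB z' (tBB uB b)"
      using z z' unfolding A.central_tensors_def B.central_tensors_def by blast+
    then show "mTT (tTT (tT a b) uT) (S z z') = mTT (S z z') (tTT uT (tT a b))"
      by (simp add: tens_unit_shuffle unit_tens_shuffle shuffle_mult)
  qed
  then show ?thesis unfolding T.central_tensors_def by blast
qed

text \<open>The contractions commute with the actions of \<open>A \<otimes> A\<close> resp. \<open>B \<otimes> B\<close>.\<close>

lemma contract_right_central: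
  assumes w: "w \<in> T.central_tensors" and \<phi>: "Vector_Spaces.linear sBB (*) \<phi>"
  shows "Sh.contract_right \<phi> w \<in> A.central_tensors"
proof -
  note C = Sh.linear_contract_right[OF \<phi>] and C_tens = Sh.contract_right_tens[OF \<phi>]
  have left: "Sh.contract_right \<phi> (mTT (S x uBB) v) = mAA x (Sh.contract_right \<phi> v)" for x v
    by (rule Sh.linear_eq_on_tensors[OF
          vs_linear_compose[OF bilin_linear_right[OF T.mult_square_bilin] C]
          vs_linear_compose[OF C bilin_linear_right[OF A.mult_square_bilin]]])
      (simp add: shuffle_mult C_tens kalg_unit_left[OF B.alg_square] bilin_simps[OF A.mult_square_bilin])
  have right: "Sh.contract_right \<phi> (mTT v (S x uBB)) = mAA (Sh.contract_right \<phi> v) x" for x v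
    by (rule Sh.linear_eq_on_tensors[OF
          vs_linear_compose[OF bilin_linear_left[OF T.mult_square_bilin] C]
          vs_linear_compose[OF C bilin_linear_left[OF A.mult_square_bilin]]])
      (simp add: shuffle_mult C_tens kalg_unit_right[OF B.alg_square] bilin_simps[OF A.mult_square_bilin])
  have "mAA (tAA a uA) (Sh.contract_right \<phi> w) = mAA (Sh.contract_right \<phi> w) (tAA uA a)" for a
  proof -
    have "mTT (tTT (tT a uB) uT) w = mTT w (tTT uT (tT a uB))"
      using w unfolding T.central_tensors_def by blast
    then have "mTT (S (tAA a uA) uBB) w = mTT w (S (tAA uA a) uBB)"
      by (simp add: tens_unit_shuffle unit_tens_shuffle B.unit_square)
    then show ?thesis by (simp flip: left right)
  qed
  then show ?thesis unfolding A.central_tensors_def by blast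
qed

lemma contract_left_central:
  assumes w: "w \<in> T.central_tensors" and \<psi>: "Vector_Spaces.linear sAA (*) \<psi>"
  shows "Sh.contract_left \<psi> w \<in> B.central_tensors"
proof -
  note C = Sh.linear_contract_left[OF \<psi>] and C_tens = Sh.contract_left_tens[OF \<psi>]
  have left: "Sh.contract_left \<psi> (mTT (S uAA y) v) = mBB y (Sh.contract_left \<psi> v)" for y v
    by (rule Sh.linear_eq_on_tensors[OF
          vs_linear_compose[OF bilin_linear_right[OF T.mult_square_bilin] C]
          vs_linear_compose[OF C bilin_linear_right[OF B.mult_square_bilin]]])
      (simp add: shuffle_mult C_tens kalg_unit_left[OF A.alg_square] bilin_simps[OF B.mult_square_bilin])
  have right: "Sh.contract_left \<psi> (mTT v (S uAA y)) = mBB (Sh.contract_left \<psi> v) y" for y v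
    by (rule Sh.linear_eq_on_tensors[OF
          vs_linear_compose[OF bilin_linear_left[OF T.mult_square_bilin] C]
          vs_linear_compose[OF C bilin_linear_left[OF B.mult_square_bilin]]])
      (simp add: shuffle_mult C_tens kalg_unit_right[OF A.alg_square] bilin_simps[OF B.mult_square_bilin])
  have "mBB (tBB b uB) (Sh.contract_left \<psi> w) = mBB (Sh.contract_left \<psi> w) (tBB uB b)" for b
  proof -
    have "mTT (tTT (tT uA b) uT) w = mTT w (tTT uT (tT uA b))"
      using w unfolding T.central_tensors_def by blast
    then have "mTT (S uAA (tBB b uB)) w = mTT w (S uAA (tBB uB b))"
      by (simp add: tens_unit_shuffle unit_tens_shuffle A.unit_square)
    then show ?thesis by (simp flip: left right)
  qed
  then show ?thesis unfolding B.central_tensors_def by blast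
qed

lemma shuffle_basis_central_tensors:
  assumes PA: "A.sq.vs3.independent PA" "A.sq.vs3.span PA = A.central_tensors"
    and PB: "B.sq.vs3.independent PB" "B.sq.vs3.span PB = B.central_tensors"
  shows "inj_on (case_prod S) (PA \<times> PB)"
    and "T.sq.vs3.independent (case_prod S ` (PA \<times> PB))"
    and "T.sq.vs3.span (case_prod S ` (PA \<times> PB)) = T.central_tensors"
proof -
  show "inj_on (case_prod S) (PA \<times> PB)" "T.sq.vs3.independent (case_prod S ` (PA \<times> PB))"
    by (rule Sh.independent_tensors[OF PA(1) PB(1)])+
  show "T.sq.vs3.span (case_prod S ` (PA \<times> PB)) = T.central_tensors"
  proof
    have "case_prod S ` (PA \<times> PB) \<subseteq> T.central_tensors"
      using shuffle_central A.sq.vs3.span_superset[of PA] B.sq.vs3.span_superset[of PB] PA(2) PB(2)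
      by auto
    then show "T.sq.vs3.span (case_prod S ` (PA \<times> PB)) \<subseteq> T.central_tensors"
      by (rule T.sq.vs3.span_minimal[OF _ T.subspace_central_tensors])
    show "T.central_tensors \<subseteq> T.sq.vs3.span (case_prod S ` (PA \<times> PB))"
    proof
      fix w assume "w \<in> T.central_tensors"
      then show "w \<in> T.sq.vs3.span (case_prod S ` (PA \<times> PB))"
        using Sh.mem_span_tensors_if_contractions[OF PA(1) PB(1)]
          contract_right_central contract_left_central PA(2) PB(2)
        by blast
    qed
  qed
qed

definition frob_tensor :: "('a \<Rightarrow> 'aa) \<Rightarrow> ('b \<Rightarrow> 'bb) \<Rightarrow> 't \<Rightarrow> 'tt"
  where "frob_tensor \<Delta> \<Gamma> = T.frob_of (S (\<Delta> uA) (\<Gamma> uB))"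

lemma bilin_frob_tensor: "bilin (fun_scale sAA) (fun_scale sBB) (fun_scale sTT) frob_tensor"
  unfolding frob_tensor_def
  by (rule bilin_compose_linear[OF bilin_linear_compose[OF Sh.bilin_tens
        vs_linear_eval[OF A.sq.vs3.vector_space_axioms] vs_linear_eval[OF B.sq.vs3.vector_space_axioms]]
        T.linear_frob_of])

lemma frob_tensor_frob: "\<Delta> \<in> A.E \<Longrightarrow> \<Gamma> \<in> B.E \<Longrightarrow> frob_tensor \<Delta> \<Gamma> \<in> T.E"
  unfolding frob_tensor_def
  by (intro T.frob_of_central shuffle_central A.frob_unit_central B.frob_unit_central)

text \<open>Evaluation at \<open>1\<close> turns bases of \<open>\<E>\<^sub>A\<close> and \<open>\<E>\<^sub>B\<close> into bases of the central
  tensors, where \<open>S\<close> maps their product to a basis.\<close>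

lemma frob_tensor_basis:
  assumes DA: "module.independent (fun_scale sAA) DA" "module.span (fun_scale sAA) DA = A.E"
    and DB: "module.independent (fun_scale sBB) DB" "module.span (fun_scale sBB) DB = B.E"
  shows "inj_on (case_prod frob_tensor) (DA \<times> DB)"
    and "module.independent (fun_scale sTT) (case_prod frob_tensor ` (DA \<times> DB))"
    and "module.span (fun_scale sTT) (case_prod frob_tensor ` (DA \<times> DB)) = T.E"
proof -
  interpret fT: vector_space_pair sTT "fun_scale sTT"
    using vector_space_fun_scale T.sq.vs3.vector_space_axioms by (simp add: vector_space_pair_def)
  interpret fA: vector_space "fun_scale sAA"
    by (rule vector_space_fun_scale[OF A.sq.vs3.vector_space_axioms])
  interpret fB: vector_space "fun_scale sBB"
    by (rule vector_space_fun_scale[OF B.sq.vs3.vector_space_axioms])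
  let ?PA = "(\<lambda>\<Delta>. \<Delta> uA) ` DA" and ?PB = "(\<lambda>\<Gamma>. \<Gamma> uB) ` DB"
  note basis = shuffle_basis_central_tensors[OF A.basis_central_tensors[OF DA]
      B.basis_central_tensors[OF DB]]
  have sub: "DA \<subseteq> A.E" "DB \<subseteq> B.E"
    using fA.span_superset[of DA] fB.span_superset[of DB] DA(2) DB(2) by simp_all
  show "inj_on (case_prod frob_tensor) (DA \<times> DB)"
  proof (rule inj_onI, clarify)
    fix \<Delta> \<Gamma> \<Delta>' \<Gamma>'
    assume D: "\<Delta> \<in> DA" "\<Gamma> \<in> DB" "\<Delta>' \<in> DA" "\<Gamma>' \<in> DB"
      and eq: "frob_tensor \<Delta> \<Gamma> = frob_tensor \<Delta>' \<Gamma>'"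
    have "S (\<Delta> uA) (\<Gamma> uB) = S (\<Delta>' uA) (\<Gamma>' uB)"
      using arg_cong[OF eq, of "\<lambda>f. f uT"] by (simp add: frob_tensor_def T.frob_of_unit)
    then have "\<Delta> uA = \<Delta>' uA" "\<Gamma> uB = \<Gamma>' uB"
      using inj_onD[OF basis(1), of "(\<Delta> uA, \<Gamma> uB)" "(\<Delta>' uA, \<Gamma>' uB)"] D by auto
    then show "\<Delta> = \<Delta>' \<and> \<Gamma> = \<Gamma>'"
      using inj_onD[OF bij_betw_imp_inj_on[OF A.bij_betw_eval_unit]]
        inj_onD[OF bij_betw_imp_inj_on[OF B.bij_betw_eval_unit]] D sub by blast
  qed
  have image: "case_prod frob_tensor ` (DA \<times> DB) = T.frob_of ` case_prod S ` (?PA \<times> ?PB)"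
    by (simp add: image_paired_Times[symmetric] image_image case_prod_beta frob_tensor_def)
  note inj_frob_of = bij_betw_imp_inj_on[OF T.bij_betw_frob_of]
  show "fT.vs2.independent (case_prod frob_tensor ` (DA \<times> DB))"
    unfolding image
    by (rule fT.linear_independent_injective_image[OF T.linear_frob_of basis(2)])
      (simp only: basis(3) inj_frob_of)
  show "fT.vs2.span (case_prod frob_tensor ` (DA \<times> DB)) = T.E"
    unfolding image fT.linear_span_image[OF T.linear_frob_of] basis(3)
    by (rule bij_betw_imp_surj_on[OF T.bij_betw_frob_of])
qed

lemma frob_space_tensor:
  shows "\<exists>\<theta>. is_tensor_on (fun_scale sAA) A.E (fun_scale sBB) B.E (fun_scale sTT) T.E \<theta>"
    and "edim (fun_scale sTT) T.E = edim (fun_scale sAA) A.E * edim (fun_scale sBB) B.E"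
proof -
  note VA = vector_space_fun_scale[OF A.sq.vs3.vector_space_axioms]
    and VB = vector_space_fun_scale[OF B.sq.vs3.vector_space_axioms]
    and VT = vector_space_fun_scale[OF T.sq.vs3.vector_space_axioms]
  obtain DA where DA: "module.independent (fun_scale sAA) DA" "module.span (fun_scale sAA) DA = A.E"
    by (rule vector_space.basis_of_subspace[OF VA A.subspace_frob_space])
  obtain DB where DB: "module.independent (fun_scale sBB) DB" "module.span (fun_scale sBB) DB = B.E"
    by (rule vector_space.basis_of_subspace[OF VB B.subspace_frob_space])
  from tensor_on_if_bases[OF VA VB VT DA DB _ bilin_on_if_bilin[OF bilin_frob_tensor]
      frob_tensor_basis[OF DA DB]] frob_tensor_frob
  show "\<exists>\<theta>. is_tensor_on (fun_scale sAA) A.E (fun_scale sBB) B.E (fun_scale sTT) T.E \<theta>"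
    and "edim (fun_scale sTT) T.E = edim (fun_scale sAA) A.E * edim (fun_scale sBB) B.E"
    by blast+
qed

end

theorem proposition8:
  fixes sA :: "'k::field \<Rightarrow> 'a::ab_group_add \<Rightarrow> 'a" and mA :: "'a \<Rightarrow> 'a \<Rightarrow> 'a" and uA :: 'a
    and sB :: "'k \<Rightarrow> 'b::ab_group_add \<Rightarrow> 'b" and mB :: "'b \<Rightarrow> 'b \<Rightarrow> 'b" and uB :: 'b
    \<comment> \<open>A (x) A, B (x) B\<close>
    and sAA :: "'k \<Rightarrow> 'aa::ab_group_add \<Rightarrow> 'aa" and tAA :: "'a \<Rightarrow> 'a \<Rightarrow> 'aa"
    and mAA :: "'aa \<Rightarrow> 'aa \<Rightarrow> 'aa" and uAA :: 'aa
    and sBB :: "'k \<Rightarrow> 'bb::ab_group_add \<Rightarrow> 'bb" and tBB :: "'b \<Rightarrow> 'b \<Rightarrow> 'bb"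
    and mBB :: "'bb \<Rightarrow> 'bb \<Rightarrow> 'bb" and uBB :: 'bb
    \<comment> \<open>(A x B) (x) (A x B)\<close>
    and sP :: "'k \<Rightarrow> 'p::ab_group_add \<Rightarrow> 'p" and tP :: "'a \<times> 'b \<Rightarrow> 'a \<times> 'b \<Rightarrow> 'p"
    and mP :: "'p \<Rightarrow> 'p \<Rightarrow> 'p" and uP :: 'p
    \<comment> \<open>A (x) B and (A (x) B) (x) (A (x) B)\<close>
    and sT :: "'k \<Rightarrow> 't::ab_group_add \<Rightarrow> 't" and tT :: "'a \<Rightarrow> 'b \<Rightarrow> 't"
    and mT :: "'t \<Rightarrow> 't \<Rightarrow> 't" and uT :: 't
    and sTT :: "'k \<Rightarrow> 'tt::ab_group_add \<Rightarrow> 'tt" and tTT :: "'t \<Rightarrow> 't \<Rightarrow> 'tt"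
    and mTT :: "'tt \<Rightarrow> 'tt \<Rightarrow> 'tt" and uTT :: 'tt
  assumes A: "kalg sA mA uA"
    and B: "kalg sB mB uB"
    and AA: "tensor_alg sA mA uA sA mA uA sAA tAA mAA uAA"
    and BB: "tensor_alg sB mB uB sB mB uB sBB tBB mBB uBB"
    and P: "tensor_alg (prod_scale sA sB) (prod_mult mA mB) (uA, uB)
                       (prod_scale sA sB) (prod_mult mA mB) (uA, uB) sP tP mP uP"
    and T: "tensor_alg sA mA uA sB mB uB sT tT mT uT"
    and TT: "tensor_alg sT mT uT sT mT uT sTT tTT mTT uTT"
  shows
    "(\<exists>\<phi>. lin_on (fun_scale sP) (frob_space (prod_scale sA sB) (prod_mult mA mB) (uA, uB) sP tP mP)
                 (prod_scale (fun_scale sAA) (fun_scale sBB)) \<phi> \<and>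
          bij_betw \<phi> (frob_space (prod_scale sA sB) (prod_mult mA mB) (uA, uB) sP tP mP)
                     (frob_space sA mA uA sAA tAA mAA \<times> frob_space sB mB uB sBB tBB mBB))
   \<and> edim (fun_scale sP) (frob_space (prod_scale sA sB) (prod_mult mA mB) (uA, uB) sP tP mP)
       = edim (fun_scale sAA) (frob_space sA mA uA sAA tAA mAA)
         + edim (fun_scale sBB) (frob_space sB mB uB sBB tBB mBB)
   \<and> (\<exists>\<theta>. is_tensor_on (fun_scale sAA) (frob_space sA mA uA sAA tAA mAA)
                       (fun_scale sBB) (frob_space sB mB uB sBB tBB mBB)
                       (fun_scale sTT) (frob_space sT mT uT sTT tTT mTT) \<theta>)
   \<and> edim (fun_scale sTT) (frob_space sT mT uT sTT tTT mTT)
       = edim (fun_scale sAA) (frob_space sA mA uA sAA tAA mAA)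
         * edim (fun_scale sBB) (frob_space sB mB uB sBB tBB mBB)"
proof -
  interpret A: frobenius_setting sA mA uA sAA tAA mAA uAA using A AA by unfold_locales
  interpret B: frobenius_setting sB mB uB sBB tBB mBB uBB using B BB by unfold_locales
  interpret AxB: product_setting sA mA uA sAA tAA mAA uAA sB mB uB sBB tBB mBB uBB sP tP mP uP
    using P by unfold_locales
  obtain S where S: "tensor_product sAA sBB sTT S"
    and S_tens: "\<And>a a' b b'. S (tAA a a') (tBB b b') = tTT (tT a b) (tT a' b')"
    using tensor_shuffle_exists[OF A.sq.tensor_product_axioms B.sq.tensor_product_axioms
        tensor_alg_tensor_product[OF T] tensor_alg_tensor_product[OF TT]] by blast
  interpret AoB: tensor_setting sA mA uA sAA tAA mAA uAA sB mB uB sBB tBB mBB uBB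
      sT tT mT uT sTT tTT mTT uTT S
    by (rule tensor_setting.intro[OF A.frobenius_setting_axioms B.frobenius_setting_axioms
          tensor_setting_axioms.intro[OF T TT S S_tens]])
  show ?thesis
    using lin_on_if_linear[OF AxB.linear_split_corners] AxB.bij_betw_split_corners
      AxB.edim_frob_space_prod AoB.frob_space_tensor by blast
qed

end
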